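(* In the setting described in the context, for every $\boldsymbol{x}\in\mathbb{Z}_+^2$, $\hat\Phi^{(1)}_{\boldsymbol{x}}(z)$ is element-wise analytic in the open disk $\{z\in\mathbb{C}:|z|<\exp(\max_{(\theta_1,\theta_2)\in\bar\Gamma}\theta_1)\}$ and $\hat\Phi^{(2)}_{\boldsymbol{x}}(w)$ is element-wise analytic in the open disk $\{w\in\mathbb{C}:|w|<\exp(\max_{(\theta_1,\theta_2)\in\bar\Gamma}\theta_2)\}$.
   Context: Let $S_0=\{1,\dots,s_0\}$ be finite and $\{\boldsymbol{Y}_n\}$ a Markov chain on $\mathbb{S}=\mathbb{Z}^2\times S_0$ with $\mathbb{P}(\boldsymbol{Y}_{n+1}=(x_1+k,x_2+l,j')\mid\boldsymbol{Y}_n=(x_1,x_2,j))=[A_{k,l}]_{j,j'}$ for $k,l\in\{-1,0,1\}$ (no other transitions), $A_{k,l}$ nonnegative $s_0\times s_0$ with $\sum A_{k,l}$ stochastic. Let $\mathbb{S}_+=\mathbb{Z}_+^2\times S_0$, $P_+$ the restriction of the transition matrix to $\mathbb{S}_+$, $\tau=\inf\{n\ge0:\boldsymbol{Y}_n\notin\mathbb{S}_+\}$, $\tilde q_{\boldsymbol{y},\boldsymbol{y}'}=\mathbb{E}\big(\sum_{n=0}^{\tau-1}1(\boldsymbol{Y}_n=\boldsymbol{y}')\mid\boldsymbol{Y}_0=\boldsymbol{y}\big)$. With $\boldsymbol\pi_{*,*}$ the stationary distribution of $\sum A_{k,l}$, $a_1=\boldsymbol{\pi}_{*,*}\sum_l(A_{1,l}-A_{-1,l})\mathbf{1}$,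 $a_2=\boldsymbol{\pi}_{*,*}\sum_k(A_{k,1}-A_{k,-1})\mathbf{1}$. Standing assumptions: $\{\boldsymbol Y_n\}$ irreducible and aperiodic; $a_1<0$ or $a_2<0$; $P_+$ irreducible. For $\boldsymbol x,\boldsymbol x'\in\mathbb{Z}_+^2$, $N_{\boldsymbol{x},\boldsymbol{x}'}=(\tilde q_{(\boldsymbol{x},j),(\boldsymbol{x}',j')};j,j'\in S_0)$; $\hat\Phi^{(1)}_{\boldsymbol{x}}(z)=\sum_{k\ge1}z^kN_{\boldsymbol{x},(k,0)}$, $\hat\Phi^{(2)}_{\boldsymbol{x}}(w)=\sum_{k\ge1}w^kN_{\boldsymbol{x},(0,k)}$ for complex $z,w$. $\bar\Gamma=\{(\theta_1,\theta_2)\in\mathbb{R}^2:\mathrm{spr}(\sum_{k,l}e^{k\theta_1+l\theta_2}A_{k,l})\le1\}$. *)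

theory Defs
  imports "HOL-Analysis.Analysis" "Jordan_Normal_Form.Spectral_Radius"
begin

text \<open>Phases: S_0 = {0..<s0} (the paper's {1,...,s0} shifted by one).
  A k l i j is the (i,j) entry of the block A_{k,l}; only k,l in {-1,0,1} are used.\<close>

type_synonym state = "int \<times> int \<times> nat"

definition steps :: "int set" where "steps = {-1, 0, 1}"

definition trans_prob :: "(int \<Rightarrow> int \<Rightarrow> nat \<Rightarrow> nat \<Rightarrow> real) \<Rightarrow> nat \<Rightarrow> state \<Rightarrow> state \<Rightarrow> real" where
  "trans_prob A s0 y y' =
     (case y of (x1, x2, j) \<Rightarrow> case y' of (x1', x2', j') \<Rightarrow>
        if x1' - x1 \<in> steps \<and> x2' - x2 \<in> steps \<and> j < s0 \<and> j' < s0
        then A (x1' - x1) (x2' - x2) j j' else 0)"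

definition state_space :: "nat \<Rightarrow> state set" where
  "state_space s0 = {(x1, x2, j). j < s0}"

definition pos_space :: "nat \<Rightarrow> state set" where
  "pos_space s0 = {(x1, x2, j). 0 \<le> x1 \<and> 0 \<le> x2 \<and> j < s0}"

definition nbrs :: "nat \<Rightarrow> state \<Rightarrow> state set" where
  "nbrs s0 y = (case y of (x1, x2, j) \<Rightarrow>
      {(x1 + k, x2 + l, j'') | k l j''. k \<in> steps \<and> l \<in> steps \<and> j'' < s0})"

text \<open>n-step transition probabilities of a transition matrix P that only has
  transitions to neighbours (matrix power P^n).\<close>
fun npow :: "nat \<Rightarrow> (state \<Rightarrow> state \<Rightarrow> real) \<Rightarrow> nat \<Rightarrow> state \<Rightarrow> state \<Rightarrow> real" where
  "npow s0 P 0 y y' = (if y = y' then 1 else 0)"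
| "npow s0 P (Suc n) y y' = (\<Sum>y''\<in>nbrs s0 y. P y y'' * npow s0 P n y'' y')"

definition trans_plus :: "(int \<Rightarrow> int \<Rightarrow> nat \<Rightarrow> nat \<Rightarrow> real) \<Rightarrow> nat \<Rightarrow> state \<Rightarrow> state \<Rightarrow> real" where
  "trans_plus A s0 y y' =
     (if y \<in> pos_space s0 \<and> y' \<in> pos_space s0 then trans_prob A s0 y y' else 0)"

text \<open>Expected number of visits to y' before the exit time tau from S_+,
  starting at y:  E(sum_{n<tau} 1(Y_n = y') | Y_0 = y) = sum_n P(Y_n = y', tau > n)
  = sum_n (P_+^n)_{y,y'} (value in [0, infinity]).\<close>
definition qtilde :: "(int \<Rightarrow> int \<Rightarrow> nat \<Rightarrow> nat \<Rightarrow> real) \<Rightarrow> nat \<Rightarrow> state \<Rightarrow> state \<Rightarrow> ennreal" where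
  "qtilde A s0 y y' = (\<Sum>n. ennreal (npow s0 (trans_plus A s0) n y y'))"

definition Nblk :: "(int \<Rightarrow> int \<Rightarrow> nat \<Rightarrow> nat \<Rightarrow> real) \<Rightarrow> nat \<Rightarrow> int \<times> int \<Rightarrow> int \<times> int \<Rightarrow> nat \<Rightarrow> nat \<Rightarrow> real" where
  "Nblk A s0 x x' j j' = enn2real (qtilde A s0 (fst x, snd x, j) (fst x', snd x', j'))"

definition Phi1 :: "(int \<Rightarrow> int \<Rightarrow> nat \<Rightarrow> nat \<Rightarrow> real) \<Rightarrow> nat \<Rightarrow> int \<times> int \<Rightarrow> complex \<Rightarrow> nat \<Rightarrow> nat \<Rightarrow> complex" where
  "Phi1 A s0 x z j j' = (\<Sum>k. z ^ Suc k * complex_of_real (Nblk A s0 x (int (Suc k), 0) j j'))"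

definition Phi2 :: "(int \<Rightarrow> int \<Rightarrow> nat \<Rightarrow> nat \<Rightarrow> real) \<Rightarrow> nat \<Rightarrow> int \<times> int \<Rightarrow> complex \<Rightarrow> nat \<Rightarrow> nat \<Rightarrow> complex" where
  "Phi2 A s0 x w j j' = (\<Sum>k. w ^ Suc k * complex_of_real (Nblk A s0 x (0, int (Suc k)) j j'))"

definition Astar :: "(int \<Rightarrow> int \<Rightarrow> nat \<Rightarrow> nat \<Rightarrow> real) \<Rightarrow> nat \<Rightarrow> real \<Rightarrow> real \<Rightarrow> complex Matrix.mat" where
  "Astar A s0 th1 th2 = Matrix.mat s0 s0 (\<lambda>(i, j).
      complex_of_real (\<Sum>k\<in>steps. \<Sum>l\<in>steps. exp (of_int k * th1 + of_int l * th2) * A k l i j))"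

definition Gamma_bar :: "(int \<Rightarrow> int \<Rightarrow> nat \<Rightarrow> nat \<Rightarrow> real) \<Rightarrow> nat \<Rightarrow> (real \<times> real) set" where
  "Gamma_bar A s0 = {(th1, th2). spectral_radius (Astar A s0 th1 th2) \<le> 1}"

definition irreducible_on :: "nat \<Rightarrow> (state \<Rightarrow> state \<Rightarrow> real) \<Rightarrow> state set \<Rightarrow> bool" where
  "irreducible_on s0 P S = (\<forall>y\<in>S. \<forall>y'\<in>S. \<exists>n. npow s0 P n y y' > 0)"

definition aperiodic_on :: "nat \<Rightarrow> (state \<Rightarrow> state \<Rightarrow> real) \<Rightarrow> state set \<Rightarrow> bool" where
  "aperiodic_on s0 P S = (\<forall>y\<in>S. Gcd {n. n > 0 \<and> npow s0 P n y y > 0} = 1)"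

end

theory Submission
  imports Defs "HOL-Complex_Analysis.Complex_Analysis"
begin

(*
  For theta = (th1, th2) let A(theta) = sum_{k,l} e^(k th1 + l th2) A_{k,l}.  Weighting paths by
  e^(theta . x) gives  (P_+^n)_{(x,j),(x',j')} <= e^(-theta . (x' - x)) (A(theta)^n)_{j,j'},
  so N_{x,x'} decays like e^(-theta . x') whenever the powers of A(theta) are summable.

  Summability holds at some theta*: if the mean drift a_u in a coordinate direction u is
  negative, then for small t > 0 the vector 1 + t w, with w an approximate solution of the
  Poisson equation (I - A(0)) w = drift - a_u, is a Lyapunov vector of A(t u) with ratio
  1 + t a_u / 8 < 1.  For theta in Gamma_bar the powers of A(theta) grow at most polynomially
  (spectral radius <= 1), and by Hoelder's inequality theta |-> A(theta)^n is entrywise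
  log-convex, so the powers decay geometrically on the open segment from theta* to theta.
  These segments approach every point of Gamma_bar; hence for |z| < exp (sup th1) the series
  Phi^(1) is dominated by a geometric series, and likewise Phi^(2).  Irreducibility makes
  Gamma_bar bounded in every direction, so the suprema are finite.
*)

lemma finite_steps [simp]: "finite steps"
  by (simp add: steps_def)

lemma sum_rotate3:
  "(\<Sum>x\<in>X. \<Sum>y\<in>Y. \<Sum>z\<in>Z. f x y z) = (\<Sum>z\<in>Z. \<Sum>x\<in>X. \<Sum>y\<in>Y. f x y z)"
proof -
  have "(\<Sum>x\<in>X. \<Sum>y\<in>Y. \<Sum>z\<in>Z. f x y z) = (\<Sum>x\<in>X. \<Sum>z\<in>Z. \<Sum>y\<in>Y. f x y z)"
    by (rule sum.cong[OF refl], rule sum.swap)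
  also have "\<dots> = (\<Sum>z\<in>Z. \<Sum>x\<in>X. \<Sum>y\<in>Y. f x y z)"
    by (rule sum.swap)
  finally show ?thesis .
qed

lemma sum_steps_weighted: "(\<Sum>k\<in>steps. of_int k * f k) = f 1 - (f (-1) :: real)"
  by (simp add: steps_def)

fun matpow :: "nat \<Rightarrow> (nat \<Rightarrow> nat \<Rightarrow> real) \<Rightarrow> nat \<Rightarrow> nat \<Rightarrow> nat \<Rightarrow> real" where
  "matpow s0 M 0 i j = (if i = j then 1 else 0)"
| "matpow s0 M (Suc n) i j = (\<Sum>m<s0. M i m * matpow s0 M n m j)"

lemma matpow_nonneg: "(\<And>i j. M i j \<ge> 0) \<Longrightarrow> matpow s0 M n i j \<ge> 0"
  by (induction n arbitrary: i) (auto intro!: sum_nonneg)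

lemma matpow_add:
  "i < s0 \<Longrightarrow> matpow s0 M (a + b) i j = (\<Sum>m<s0. matpow s0 M a i m * matpow s0 M b m j)"
proof (induction a arbitrary: i)
  case 0
  then show ?case by (simp add: if_distrib[of "\<lambda>x. x * _"] cong: if_cong)
next
  case (Suc a)
  have "matpow s0 M (Suc a + b) i j
      = (\<Sum>m<s0. M i m * (\<Sum>m'<s0. matpow s0 M a m m' * matpow s0 M b m' j))"
    using Suc by simp
  also have "\<dots> = (\<Sum>m'<s0. \<Sum>m<s0. M i m * matpow s0 M a m m' * matpow s0 M b m' j)"
    by (subst sum.swap) (simp add: sum_distrib_left mult.assoc)
  also have "\<dots> = (\<Sum>m'<s0. matpow s0 M (Suc a) i m' * matpow s0 M b m' j)"
    by (simp add: sum_distrib_right)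
  finally show ?case .
qed

lemma matpow_Suc_right:
  "i < s0 \<Longrightarrow> j < s0 \<Longrightarrow> matpow s0 M (Suc n) i j = (\<Sum>m<s0. matpow s0 M n i m * M m j)"
  using matpow_add[of i s0 M n 1 j]
  by (simp add: mult.commute[of _ "if _ then _ else _"] if_distrib[of "\<lambda>x. x * _"] cong: if_cong)

lemma matpow_row_sum:
  assumes "\<And>i. i < s0 \<Longrightarrow> (\<Sum>j<s0. M i j) = 1" and "i < s0"
  shows "(\<Sum>j<s0. matpow s0 M n i j) = 1"
  using assms(2)
proof (induction n arbitrary: i)
  case (Suc n)
  have "(\<Sum>j<s0. matpow s0 M (Suc n) i j) = (\<Sum>j<s0. \<Sum>m<s0. M i m * matpow s0 M n m j)"
    by simp
  also have "\<dots> = (\<Sum>m<s0. M i m * (\<Sum>j<s0. matpow s0 M n m j))"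
    by (subst sum.swap) (simp add: sum_distrib_left)
  finally show ?case using assms(1) Suc by simp
qed simp

lemma matpow_diag_power_le:
  assumes "\<And>i j. M i j \<ge> 0" and "i < s0"
  shows "matpow s0 M n i i ^ m \<le> matpow s0 M (m * n) i i"
proof (induction m)
  case (Suc m)
  have "matpow s0 M n i i * matpow s0 M (m * n) i i
      \<le> (\<Sum>j<s0. matpow s0 M n i j * matpow s0 M (m * n) j i)"
    using assms by (intro member_le_sum[where f = "\<lambda>j. matpow s0 M n i j * matpow s0 M (m * n) j i"])
      (auto intro!: mult_nonneg_nonneg matpow_nonneg)
  also have "\<dots> = matpow s0 M (Suc m * n) i i"
    using matpow_add[OF assms(2), of M n "m * n" i] by (simp add: add.commute)
  finally show ?case
    using Suc assms by (auto intro: order_trans[OF mult_left_mono] matpow_nonneg)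
qed simp

section \<open>Log-convexity of the tilted phase matrices\<close>

definition A_theta :: "(int \<Rightarrow> int \<Rightarrow> nat \<Rightarrow> nat \<Rightarrow> real) \<Rightarrow> real \<Rightarrow> real \<Rightarrow> nat \<Rightarrow> nat \<Rightarrow> real" where
  "A_theta A th1 th2 i j = (\<Sum>k\<in>steps. \<Sum>l\<in>steps. exp (of_int k * th1 + of_int l * th2) * A k l i j)"

lemma A_theta_nonneg: "(\<And>k l i j. A k l i j \<ge> 0) \<Longrightarrow> A_theta A th1 th2 i j \<ge> 0"
  unfolding A_theta_def by (auto intro!: sum_nonneg)

lemma holder_sum_powr:
  fixes f g :: "'a \<Rightarrow> real"
  assumes S: "finite S" and f: "\<And>x. x \<in> S \<Longrightarrow> 0 \<le> f x" and g: "\<And>x. x \<in> S \<Longrightarrow> 0 \<le> g x"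
    and s: "0 < s" "s < 1"
  shows "(\<Sum>x\<in>S. f x powr s * g x powr (1 - s)) \<le> (\<Sum>x\<in>S. f x) powr s * (\<Sum>x\<in>S. g x) powr (1 - s)"
proof -
  define F where "F = (\<Sum>x\<in>S. f x)"
  define G where "G = (\<Sum>x\<in>S. g x)"
  have amgm: "a powr s * b powr (1 - s) \<le> s * a + (1 - s) * b" if "0 \<le> a" "0 \<le> b" for a b :: real
    using that s Youngs_inequality_0[of s "1 - s" a b] by (cases "a = 0 \<or> b = 0") auto
  show ?thesis
  proof (cases "F = 0 \<or> G = 0")
    case True
    then have "\<forall>x\<in>S. f x = 0 \<or> g x = 0"
      using sum_nonneg_eq_0_iff[OF S] f g unfolding F_def G_def by blast
    then show ?thesis
      by (simp add: sum.neutral)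
  next
    case False
    moreover have "F \<ge> 0" "G \<ge> 0"
      unfolding F_def G_def using f g by (auto intro: sum_nonneg)
    ultimately have F: "F > 0" and G: "G > 0" by auto
    have "(\<Sum>x\<in>S. f x powr s * g x powr (1 - s))
        = (\<Sum>x\<in>S. F powr s * G powr (1 - s) * ((f x / F) powr s * (g x / G) powr (1 - s)))"
      using F G f g by (intro sum.cong refl) (simp add: powr_divide field_simps)
    also have "\<dots> \<le> (\<Sum>x\<in>S. F powr s * G powr (1 - s) * (s * (f x / F) + (1 - s) * (g x / G)))"
      using f g F G by (intro sum_mono mult_left_mono amgm) auto
    also have "\<dots> = F powr s * G powr (1 - s) * (s * (\<Sum>x\<in>S. f x) / F + (1 - s) * (\<Sum>x\<in>S. g x) / G)"
      by (simp add: sum_distrib_left sum.distrib sum_divide_distrib[symmetric] field_simps)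
    also have "\<dots> = F powr s * G powr (1 - s)"
      using F G unfolding F_def[symmetric] G_def[symmetric] by simp
    finally show ?thesis unfolding F_def G_def .
  qed
qed

lemma A_theta_log_convex:
  assumes A: "\<And>k l i j. A k l i j \<ge> 0" and s: "0 < s" "s < 1"
  shows "A_theta A (s * a1 + (1 - s) * a2) (s * b1 + (1 - s) * b2) i j
     \<le> A_theta A a1 b1 i j powr s * A_theta A a2 b2 i j powr (1 - s)"
proof -
  let ?e = "\<lambda>a b k l. exp (of_int k * a + of_int l * b) * A k l i j"
  have split: "?e (s * a1 + (1 - s) * a2) (s * b1 + (1 - s) * b2) k l
      = ?e a1 b1 k l powr s * ?e a2 b2 k l powr (1 - s)" for k l
  proof (cases "A k l i j = 0")
    case False
    then have pos: "A k l i j > 0" using A[of k l i j] by simp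
    have "?e a1 b1 k l powr s * ?e a2 b2 k l powr (1 - s)
        = exp (s * (of_int k * a1 + of_int l * b1)) * exp ((1 - s) * (of_int k * a2 + of_int l * b2))
          * (A k l i j powr s * A k l i j powr (1 - s))"
      using pos by (simp add: powr_def ln_mult distrib_left exp_add mult_ac)
    also have "A k l i j powr s * A k l i j powr (1 - s) = A k l i j"
      using pos by (simp add: powr_add[symmetric])
    finally show ?thesis by (simp add: exp_add[symmetric] algebra_simps)
  qed simp
  have "A_theta A (s * a1 + (1 - s) * a2) (s * b1 + (1 - s) * b2) i j
      = (\<Sum>k\<in>steps. \<Sum>l\<in>steps. ?e a1 b1 k l powr s * ?e a2 b2 k l powr (1 - s))"
    unfolding A_theta_def split ..
  also have "\<dots> \<le> (\<Sum>k\<in>steps. (\<Sum>l\<in>steps. ?e a1 b1 k l) powr s * (\<Sum>l\<in>steps. ?e a2 b2 k l) powr (1 - s))"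
    using A s by (intro sum_mono holder_sum_powr) auto
  also have "\<dots> \<le> A_theta A a1 b1 i j powr s * A_theta A a2 b2 i j powr (1 - s)"
    unfolding A_theta_def using A s by (intro holder_sum_powr) (auto intro!: sum_nonneg)
  finally show ?thesis .
qed

lemma matpow_A_theta_log_convex:
  assumes A: "\<And>k l i j. A k l i j \<ge> 0" and s: "0 < s" "s < 1"
  shows "matpow s0 (A_theta A (s * a1 + (1 - s) * a2) (s * b1 + (1 - s) * b2)) n i j
     \<le> matpow s0 (A_theta A a1 b1) n i j powr s * matpow s0 (A_theta A a2 b2) n i j powr (1 - s)"
proof (induction n arbitrary: i)
  case (Suc n)
  let ?M = "A_theta A (s * a1 + (1 - s) * a2) (s * b1 + (1 - s) * b2)"
  let ?M1 = "A_theta A a1 b1" and ?M2 = "A_theta A a2 b2"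
  have nonneg: "0 \<le> ?M1 i j" "0 \<le> ?M2 i j" "0 \<le> matpow s0 ?M1 n i j" "0 \<le> matpow s0 ?M2 n i j"
    for i j using A by (auto intro!: A_theta_nonneg matpow_nonneg)
  have "matpow s0 ?M (Suc n) i j = (\<Sum>m<s0. ?M i m * matpow s0 ?M n m j)" by simp
  also have "\<dots> \<le> (\<Sum>m<s0. (?M1 i m powr s * ?M2 i m powr (1 - s))
                           * (matpow s0 ?M1 n m j powr s * matpow s0 ?M2 n m j powr (1 - s)))"
    using Suc A_theta_log_convex[OF A s] A by (intro sum_mono mult_mono) (auto intro!: A_theta_nonneg matpow_nonneg)
  also have "\<dots> = (\<Sum>m<s0. (?M1 i m * matpow s0 ?M1 n m j) powr s * (?M2 i m * matpow s0 ?M2 n m j) powr (1 - s))"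
    using nonneg by (simp add: powr_mult mult_ac)
  also have "\<dots> \<le> (\<Sum>m<s0. ?M1 i m * matpow s0 ?M1 n m j) powr s * (\<Sum>m<s0. ?M2 i m * matpow s0 ?M2 n m j) powr (1 - s)"
    using nonneg s by (intro holder_sum_powr) auto
  finally show ?case by simp
qed simp

section \<open>Spectral radius and growth of the powers\<close>

lemma Astar_carrier: "Astar A s0 th1 th2 \<in> carrier_mat s0 s0"
  unfolding Astar_def by simp

lemma Astar_power:
  "Astar A s0 th1 th2 ^\<^sub>m n = Matrix.mat s0 s0 (\<lambda>(i, j). complex_of_real (matpow s0 (A_theta A th1 th2) n i j))"
proof (induction n)
  case 0
  show ?case by (rule eq_matI) (auto simp: Astar_def)
next
  case (Suc n)
  have "(Astar A s0 th1 th2 ^\<^sub>m Suc n) $$ (i, j) = complex_of_real (matpow s0 (A_theta A th1 th2) (Suc n) i j)"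
    if "i < s0" "j < s0" for i j
  proof -
    have "(Astar A s0 th1 th2 ^\<^sub>m Suc n) $$ (i, j) = scalar_prod (row (Astar A s0 th1 th2 ^\<^sub>m n) i) (col (Astar A s0 th1 th2) j)"
      using that Astar_carrier[of A s0 th1 th2] by simp
    also have "\<dots> = complex_of_real (\<Sum>m<s0. matpow s0 (A_theta A th1 th2) n i m * A_theta A th1 th2 m j)"
      unfolding scalar_prod_def Suc using that by (simp add: Astar_def A_theta_def atLeast0LessThan)
    finally show ?thesis
      using matpow_Suc_right[OF that] by simp
  qed
  then show ?case
    by (intro eq_matI) (use Astar_carrier[of A s0 th1 th2] in auto)
qed

lemma Gamma_bar_matpow_poly_bound:
  assumes "(th1, th2) \<in> Gamma_bar A s0"
  obtains c1 c2 where
    "\<And>n i j. i < s0 \<Longrightarrow> j < s0 \<Longrightarrow> matpow s0 (A_theta A th1 th2) n i j \<le> c1 + c2 * real n ^ (s0 - 1)"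
proof -
  have "spectral_radius (Astar A s0 th1 th2) \<le> 1"
    using assms unfolding Gamma_bar_def by simp
  then obtain c1 c2 where bound: "\<And>n. norm_bound (Astar A s0 th1 th2 ^\<^sub>m n) (c1 + c2 * of_nat n ^ (s0 - 1))"
    using spectral_radius_jnf_norm_bound_le_1_upper_triangular[OF Astar_carrier] by blast
  show ?thesis
  proof
    fix n i j assume "i < s0" "j < s0"
    then show "matpow s0 (A_theta A th1 th2) n i j \<le> c1 + c2 * real n ^ (s0 - 1)"
      using bound[of n] unfolding norm_bound_def by (force simp: Astar_power)
  qed
qed

lemma Gamma_bar_if_matpow_bounded:
  assumes s0: "s0 > 0"
    and bounded: "\<And>n i j. i < s0 \<Longrightarrow> j < s0 \<Longrightarrow> \<bar>matpow s0 (A_theta A th1 th2) n i j\<bar> \<le> B"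
  shows "(th1, th2) \<in> Gamma_bar A s0"
proof (rule ccontr)
  let ?M = "Astar A s0 th1 th2"
  assume "(th1, th2) \<notin> Gamma_bar A s0"
  then have "spectral_radius ?M > 1"
    unfolding Gamma_bar_def by simp
  moreover obtain c where c: "c \<in> spectrum ?M" "norm c = spectral_radius ?M"
    using spectral_radius_mem_max(1)[OF Astar_carrier[of A s0 th1 th2] s0] by auto
  ultimately have c_gt_1: "norm c > 1" by simp
  obtain v where v: "eigenvector ?M v c"
    using c unfolding spectrum_def eigenvalue_def by auto
  then have v_carrier: "v \<in> carrier_vec s0" and "v \<noteq> 0\<^sub>v s0"
    using Astar_carrier[of A s0 th1 th2] unfolding eigenvector_def by auto
  then obtain i0 where i0: "i0 < s0" "vec_index v i0 \<noteq> 0"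
    by (metis eq_vecI carrier_vecD index_zero_vec(1,2))
  define V where "V = (\<Sum>j<s0. B * norm (vec_index v j))"
  have "norm c ^ k * norm (vec_index v i0) \<le> V" for k
  proof -
    have "c ^ k * vec_index v i0 = vec_index ((?M ^\<^sub>m k) *\<^sub>v v) i0"
      using eigenvector_pow[OF Astar_carrier v, of k] i0 v_carrier by simp
    also have "\<dots> = (\<Sum>j<s0. complex_of_real (matpow s0 (A_theta A th1 th2) k i0 j) * vec_index v j)"
      using i0 v_carrier by (simp add: Astar_power scalar_prod_def atLeast0LessThan)
    finally have "norm (c ^ k * vec_index v i0)
        \<le> (\<Sum>j<s0. norm (complex_of_real (matpow s0 (A_theta A th1 th2) k i0 j) * vec_index v j))"
      by (simp add: norm_sum)
    also have "\<dots> \<le> V"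
      unfolding V_def using bounded i0 by (intro sum_mono) (simp add: norm_mult mult_right_mono)
    finally show ?thesis by (simp add: norm_mult norm_power)
  qed
  moreover obtain k where "V / norm (vec_index v i0) < norm c ^ k"
    using real_arch_pow[OF c_gt_1] by blast
  then have "V < norm c ^ k * norm (vec_index v i0)"
    using i0 by (simp add: pos_divide_less_eq)
  ultimately show False by (meson not_le)
qed

lemma summable_poly_times_geometric:
  fixes r :: real
  assumes "0 \<le> r" "r < 1"
  shows "summable (\<lambda>n. real n ^ d * r ^ n)"
proof (rule root_test_convergence)
  have "(\<lambda>n. root n (real n) ^ d * r) \<longlonglongrightarrow> 1 ^ d * r"
    by (intro tendsto_intros LIMSEQ_root)
  moreover have "eventually (\<lambda>n. root n (real n) ^ d * r = root n (norm (real n ^ d * r ^ n))) sequentially"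
    using eventually_gt_at_top[of "0::nat"]
    by eventually_elim (use assms in \<open>simp add: abs_mult real_root_mult real_root_power real_root_power_cancel\<close>)
  ultimately show "(\<lambda>n. root n (norm (real n ^ d * r ^ n))) \<longlonglongrightarrow> r"
    by (simp add: tendsto_cong)
qed fact

lemma exists_power_gt_poly:
  fixes x c1 c2 :: real
  assumes "x > 1"
  obtains m where "c1 + c2 * real (m * n) ^ d < x ^ m"
proof -
  have r: "0 \<le> 1 / x" "1 / x < 1" using assms by auto
  have "(\<lambda>m. c1 * (1 / x) ^ m + (c2 * real n ^ d) * (real m ^ d * (1 / x) ^ m)) \<longlonglongrightarrow> c1 * 0 + (c2 * real n ^ d) * 0"
    using r by (intro tendsto_intros summable_LIMSEQ_zero[OF summable_poly_times_geometric] LIMSEQ_power_zero) auto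
  then have "eventually (\<lambda>m. c1 * (1 / x) ^ m + (c2 * real n ^ d) * (real m ^ d * (1 / x) ^ m) < 1) sequentially"
    by (intro order_tendstoD) auto
  then obtain m where m: "c1 * (1 / x) ^ m + (c2 * real n ^ d) * (real m ^ d * (1 / x) ^ m) < 1"
    by (auto dest: eventually_happens)
  have "(c1 + c2 * real (m * n) ^ d) / x ^ m = c1 * (1 / x) ^ m + (c2 * real n ^ d) * (real m ^ d * (1 / x) ^ m)"
    by (simp add: power_mult_distrib power_divide add_divide_distrib)
  then have "(c1 + c2 * real (m * n) ^ d) / x ^ m < 1"
    using m by simp
  then show ?thesis
    using assms that by (simp add: divide_less_eq)
qed

lemma Gamma_bar_matpow_diag_le_1:
  assumes A: "\<And>k l i j. A k l i j \<ge> 0" and i: "i < s0" and th: "(th1, th2) \<in> Gamma_bar A s0"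
  shows "matpow s0 (A_theta A th1 th2) n i i \<le> 1"
proof (rule ccontr)
  let ?M = "A_theta A th1 th2"
  obtain c1 c2 where poly: "\<And>n i j. i < s0 \<Longrightarrow> j < s0 \<Longrightarrow> matpow s0 ?M n i j \<le> c1 + c2 * real n ^ (s0 - 1)"
    using Gamma_bar_matpow_poly_bound[OF th] by blast
  assume "\<not> matpow s0 ?M n i i \<le> 1"
  then obtain m where m: "c1 + c2 * real (m * n) ^ (s0 - 1) < matpow s0 ?M n i i ^ m"
    using exists_power_gt_poly[of "matpow s0 ?M n i i"] by (meson not_le)
  also have "\<dots> \<le> matpow s0 ?M (m * n) i i"
    by (rule matpow_diag_power_le[OF A_theta_nonneg[OF A] i])
  also have "\<dots> \<le> c1 + c2 * real (m * n) ^ (s0 - 1)"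
    using poly i by blast
  finally show False by simp
qed

section \<open>Exponential change of measure\<close>

lemma trans_prob_nonneg: "(\<And>k l i j. A k l i j \<ge> 0) \<Longrightarrow> 0 \<le> trans_prob A s0 y y'"
  unfolding trans_prob_def by (auto split: prod.splits)

lemma trans_plus_nonneg: "(\<And>k l i j. A k l i j \<ge> 0) \<Longrightarrow> 0 \<le> trans_plus A s0 y y'"
  unfolding trans_plus_def by (simp add: trans_prob_nonneg)

lemma trans_plus_le_trans_prob: "(\<And>k l i j. A k l i j \<ge> 0) \<Longrightarrow> trans_plus A s0 y y' \<le> trans_prob A s0 y y'"
  unfolding trans_plus_def by (simp add: trans_prob_nonneg)

lemma npow_nonneg: "(\<And>y y'. P y y' \<ge> 0) \<Longrightarrow> npow s0 P n y y' \<ge> 0"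
  by (induction n arbitrary: y) (auto intro!: sum_nonneg)

lemma sum_nbrs:
  "(\<Sum>y\<in>nbrs s0 (x1, x2, j). f y) = (\<Sum>k\<in>steps. \<Sum>l\<in>steps. \<Sum>j'<s0. f (x1 + k, x2 + l, j'))"
proof -
  have "nbrs s0 (x1, x2, j) = (\<lambda>(k, l, j'). (x1 + k, x2 + l, j')) ` (steps \<times> steps \<times> {..<s0})"
    unfolding nbrs_def by (auto simp: image_def)
  moreover have "inj_on (\<lambda>(k, l, j'). (x1 + k, x2 + l, j')) (steps \<times> steps \<times> {..<s0})"
    by (auto simp: inj_on_def)
  ultimately show ?thesis
    by (simp add: sum.reindex sum.cartesian_product split_def)
qed

lemma npow_tilted_le_matpow:
  assumes A: "\<And>k l i j. A k l i j \<ge> 0"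
    and P: "\<And>y y'. 0 \<le> P y y'" "\<And>y y'. P y y' \<le> trans_prob A s0 y y'"
    and j: "j < s0"
  shows "npow s0 P n (x1, x2, j) (x1', x2', j') * exp (th1 * of_int (x1' - x1) + th2 * of_int (x2' - x2))
    \<le> matpow s0 (A_theta A th1 th2) n j j'"
  using j
proof (induction n arbitrary: x1 x2 j)
  case (Suc n)
  let ?E = "\<lambda>x1 x2. exp (th1 * of_int (x1' - x1) + th2 * of_int (x2' - x2))"
  let ?e = "\<lambda>k l. exp (of_int k * th1 + of_int l * th2)"
  let ?N = "\<lambda>x1 x2 j. npow s0 P n (x1, x2, j) (x1', x2', j')"
  have "npow s0 P (Suc n) (x1, x2, j) (x1', x2', j') * ?E x1 x2
      = (\<Sum>k\<in>steps. \<Sum>l\<in>steps. \<Sum>j''<s0.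
           P (x1, x2, j) (x1 + k, x2 + l, j'') * ?e k l * (?N (x1 + k) (x2 + l) j'' * ?E (x1 + k) (x2 + l)))"
    unfolding npow.simps sum_nbrs sum_distrib_right
    by (intro sum.cong refl) (simp add: mult_exp_exp algebra_simps)
  also have "\<dots> \<le> (\<Sum>k\<in>steps. \<Sum>l\<in>steps. \<Sum>j''<s0.
           A k l j j'' * ?e k l * matpow s0 (A_theta A th1 th2) n j'' j')"
  proof (intro sum_mono)
    fix k l j'' assume k: "k \<in> steps" and l: "l \<in> steps" and j'': "j'' \<in> {..<s0}"
    have "P (x1, x2, j) (x1 + k, x2 + l, j'') \<le> A k l j j''"
      using P(2)[of "(x1, x2, j)" "(x1 + k, x2 + l, j'')"] k l j'' Suc.prems by (simp add: trans_prob_def)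
    moreover have "?N (x1 + k) (x2 + l) j'' * ?E (x1 + k) (x2 + l) \<le> matpow s0 (A_theta A th1 th2) n j'' j'"
      using Suc.IH[of j'' "x1 + k" "x2 + l"] j'' by simp
    ultimately show "P (x1, x2, j) (x1 + k, x2 + l, j'') * ?e k l * (?N (x1 + k) (x2 + l) j'' * ?E (x1 + k) (x2 + l))
        \<le> A k l j j'' * ?e k l * matpow s0 (A_theta A th1 th2) n j'' j'"
      using A by (intro mult_mono mult_right_mono) (auto intro: mult_nonneg_nonneg npow_nonneg[OF P(1)])
  qed
  also have "\<dots> = (\<Sum>j''<s0. \<Sum>k\<in>steps. \<Sum>l\<in>steps. A k l j j'' * ?e k l * matpow s0 (A_theta A th1 th2) n j'' j')"
    by (rule sum_rotate3)
  also have "\<dots> = (\<Sum>j''<s0. A_theta A th1 th2 j j'' * matpow s0 (A_theta A th1 th2) n j'' j')"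
    unfolding A_theta_def sum_distrib_right by (simp add: mult_ac)
  finally show ?case by simp
qed simp

lemma qtilde_le_tilted:
  assumes A: "\<And>k l i j. A k l i j \<ge> 0" and j: "j < s0"
    and summable: "summable (\<lambda>n. matpow s0 (A_theta A th1 th2) n j j')"
  shows "qtilde A s0 (x1, x2, j) (x1', x2', j')
    \<le> ennreal (exp (- (th1 * of_int (x1' - x1) + th2 * of_int (x2' - x2))) * (\<Sum>n. matpow s0 (A_theta A th1 th2) n j j'))"
proof -
  define X where "X = th1 * of_int (x1' - x1) + th2 * of_int (x2' - x2)"
  have le: "npow s0 (trans_plus A s0) n (x1, x2, j) (x1', x2', j') \<le> exp (- X) * matpow s0 (A_theta A th1 th2) n j j'" for n
  proof -
    have "npow s0 (trans_plus A s0) n (x1, x2, j) (x1', x2', j') * exp X \<le> matpow s0 (A_theta A th1 th2) n j j'"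
      unfolding X_def using npow_tilted_le_matpow[where A = A and P = "trans_plus A s0", OF A
          trans_plus_nonneg[OF A] trans_plus_le_trans_prob[OF A] j] .
    then have "npow s0 (trans_plus A s0) n (x1, x2, j) (x1', x2', j') \<le> matpow s0 (A_theta A th1 th2) n j j' / exp X"
      by (simp add: pos_le_divide_eq)
    then show ?thesis
      by (simp add: exp_minus divide_inverse mult.commute)
  qed
  have "qtilde A s0 (x1, x2, j) (x1', x2', j') \<le> (\<Sum>n. ennreal (exp (- X) * matpow s0 (A_theta A th1 th2) n j j'))"
    unfolding qtilde_def using le by (intro suminf_le summableI) (simp add: ennreal_leI)
  also have "\<dots> = ennreal (\<Sum>n. exp (- X) * matpow s0 (A_theta A th1 th2) n j j')"
    using A summable
    by (intro suminf_ennreal2 summable_mult) (auto intro!: mult_nonneg_nonneg matpow_nonneg A_theta_nonneg)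
  finally show ?thesis
    unfolding X_def using summable by (simp add: suminf_mult)
qed

lemma Nblk_le_tilted:
  assumes A: "\<And>k l i j. A k l i j \<ge> 0" and j: "j < s0"
    and summable: "summable (\<lambda>n. matpow s0 (A_theta A th1 th2) n j j')"
  shows "Nblk A s0 (x1, x2) (x1', x2') j j'
    \<le> exp (- (th1 * of_int (x1' - x1) + th2 * of_int (x2' - x2))) * (\<Sum>n. matpow s0 (A_theta A th1 th2) n j j')"
proof -
  have "0 \<le> (\<Sum>n. matpow s0 (A_theta A th1 th2) n j j')"
    using A summable by (intro suminf_nonneg) (auto intro!: matpow_nonneg A_theta_nonneg)
  then show ?thesis
    using enn2real_mono[OF qtilde_le_tilted[OF A j summable]] unfolding Nblk_def by simp
qed

section \<open>A tilt with geometrically decaying powers\<close>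

lemma oscillation_contraction:
  fixes W :: "nat \<Rightarrow> nat \<Rightarrow> real"
  assumes rows: "\<And>i. i < s0 \<Longrightarrow> (\<Sum>j<s0. W i j) = 1"
    and lower: "\<And>i j. i < s0 \<Longrightarrow> j < s0 \<Longrightarrow> W i j \<ge> \<delta>"
    and osc: "\<And>j j'. j < s0 \<Longrightarrow> j' < s0 \<Longrightarrow> v j - v j' \<le> D"
    and i: "i < s0" and i': "i' < s0"
  shows "(\<Sum>j<s0. W i j * v j) - (\<Sum>j<s0. W i' j * v j) \<le> (1 - real s0 * \<delta>) * D"
proof -
  obtain j0 where j0: "j0 < s0" and min: "\<And>j. j < s0 \<Longrightarrow> v j0 \<le> v j"
  proof -
    have "Min (v ` {..<s0}) \<in> v ` {..<s0}"
      using i by (intro Min_in) auto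
    then obtain j0 where j0: "j0 < s0" "Min (v ` {..<s0}) = v j0"
      by auto
    have "v j0 \<le> v j" if "j < s0" for j
      unfolding j0(2)[symmetric] using that by (intro Min_le) auto
    with j0(1) show ?thesis by (rule that)
  qed
  have residual: "(\<Sum>j<s0. W k j - \<delta>) = 1 - real s0 * \<delta>" if "k < s0" for k
    using rows[OF that] by (simp add: sum_subtractf)
  have split: "(\<Sum>j<s0. W k j * v j) = (\<Sum>j<s0. (W k j - \<delta>) * v j) + \<delta> * (\<Sum>j<s0. v j)" for k
    by (simp add: algebra_simps sum.distrib sum_distrib_left sum_subtractf)
  have "(\<Sum>j<s0. (W i j - \<delta>) * v j) \<le> (\<Sum>j<s0. (W i j - \<delta>) * (v j0 + D))"
    using lower i osc j0 by (intro sum_mono mult_left_mono) (auto simp: algebra_simps)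
  also have "\<dots> = (1 - real s0 * \<delta>) * (v j0 + D)"
    unfolding sum_distrib_right[symmetric] using residual[OF i] by simp
  finally have upper: "(\<Sum>j<s0. (W i j - \<delta>) * v j) \<le> (1 - real s0 * \<delta>) * (v j0 + D)" .
  have "(1 - real s0 * \<delta>) * v j0 = (\<Sum>j<s0. (W i' j - \<delta>) * v j0)"
    unfolding sum_distrib_right[symmetric] using residual[OF i'] by simp
  also have "\<dots> \<le> (\<Sum>j<s0. (W i' j - \<delta>) * v j)"
    using lower i' min by (intro sum_mono mult_left_mono) auto
  finally show ?thesis
    using upper split[of i] split[of i'] by (simp add: algebra_simps)
qed

lemma exp_le_quadratic:
  fixes x :: real
  assumes "\<bar>x\<bar> \<le> 1"
  shows "exp x \<le> 1 + x + x\<^sup>2"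
proof (cases "x \<ge> 0")
  case True
  then show ?thesis using exp_bound[of x] assms by simp
next
  case False
  define y where "y = - x"
  have y: "0 < y" "y \<le> 1" using False assms unfolding y_def by auto
  have "exp x \<le> 1 / (1 + y)"
    using exp_ge_add_one_self[of y] y unfolding y_def by (simp add: exp_minus field_simps)
  also have "\<dots> \<le> 1 - y + y\<^sup>2"
    using y by (simp add: field_simps power2_eq_square)
  finally show ?thesis unfolding y_def by simp
qed

lemma exp_mult_affine_le:
  fixes d p t W :: real
  assumes d: "\<bar>d\<bar> \<le> 1" and t: "0 < t" "t \<le> 1" and p: "\<bar>p\<bar> \<le> W" and tW: "t * W \<le> 1/2"
  shows "exp (t * d) * (1 + t * p) \<le> (1 + t * p) + t * d + t\<^sup>2 * (1 + 2 * W)"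
proof -
  have "\<bar>t * p\<bar> \<le> t * W"
    using p t by (simp add: abs_mult)
  moreover have "t * W \<le> W"
    using p t by (simp add: mult_left_le_one_le)
  ultimately have tp: "\<bar>t * p\<bar> \<le> 1/2" "\<bar>t * p\<bar> \<le> W"
    using tW by linarith+
  have "\<bar>t * d\<bar> \<le> 1"
    using d t by (simp add: abs_mult mult_le_one)
  moreover have "(t * d)\<^sup>2 \<le> t\<^sup>2"
    using d by (simp add: power_mult_distrib abs_square_le_1 mult_left_le)
  moreover have "1 + t * p \<ge> 0"
    using tp(1) by (simp add: abs_le_iff)
  ultimately have "exp (t * d) * (1 + t * p) \<le> (1 + t * d + t\<^sup>2) * (1 + t * p)"
    using exp_le_quadratic by (intro mult_right_mono) force+
  also have "\<dots> = (1 + t * p) + t * d + t\<^sup>2 * (d * p) + t\<^sup>2 * (1 + t * p)"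
    by (simp add: algebra_simps power2_eq_square)
  also have "\<dots> \<le> (1 + t * p) + t * d + t\<^sup>2 * W + t\<^sup>2 * (1 + W)"
  proof -
    have "d * p \<le> W"
      using mult_mono[OF d p] abs_ge_self[of "d * p"] by (simp add: abs_mult)
    moreover have "1 + t * p \<le> 1 + W"
      using tp(2) by (simp add: abs_le_iff)
    ultimately show ?thesis
      using t by (intro add_mono mult_left_mono) simp_all
  qed
  also have "\<dots> = (1 + t * p) + t * d + t\<^sup>2 * (1 + 2 * W)"
    by (simp add: algebra_simps)
  finally show ?thesis .
qed

lemma exists_small_tilt_parameter:
  fixes W a :: real
  assumes W: "W \<ge> 1" and a: "a < 0"
  obtains t where "0 < t" "t \<le> 1" "t * W \<le> 1/2" "t * (1 + 2 * W) \<le> - a / 4"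
proof -
  define t where "t = min (1 / (2 * W)) (- a / (4 * (1 + 2 * W)))"
  have t0: "t > 0"
    unfolding t_def using W a by (simp add: divide_neg_pos)
  have "t \<le> 1 / (2 * W)"
    unfolding t_def by simp
  then have tW: "t * W \<le> 1/2"
    using W mult_right_mono[of t "1 / (2 * W)" W] by simp
  moreover have "t \<le> t * W"
    using W t0 by simp
  ultimately have t1: "t \<le> 1"
    by linarith
  have "t * (1 + 2 * W) \<le> - a / (4 * (1 + 2 * W)) * (1 + 2 * W)"
    using W unfolding t_def by (intro mult_right_mono) auto
  also have "\<dots> = - a / 4"
    using W by (simp add: field_simps)
  finally show ?thesis
    using that t0 t1 tW by blast
qed

lemma matpow_le_of_lyapunov:
  assumes M: "\<And>i j. M i j \<ge> 0" and q: "q \<ge> 0" and lo: "lo > 0"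
    and u: "\<And>j. j < s0 \<Longrightarrow> lo \<le> u j \<and> u j \<le> hi"
    and lyapunov: "\<And>i. i < s0 \<Longrightarrow> (\<Sum>j<s0. M i j * u j) \<le> q * u i"
    and i: "i < s0" and j: "j < s0"
  shows "matpow s0 M n i j \<le> hi / lo * q ^ n"
proof -
  have iterate: "(\<Sum>j<s0. matpow s0 M n i j * u j) \<le> q ^ n * u i" if "i < s0" for i
    using that
  proof (induction n arbitrary: i)
    case (Suc n)
    have "(\<Sum>j<s0. matpow s0 M (Suc n) i j * u j) = (\<Sum>m<s0. M i m * (\<Sum>j<s0. matpow s0 M n m j * u j))"
      unfolding matpow.simps sum_distrib_left sum_distrib_right by (subst sum.swap) (simp add: mult.assoc)
    also have "\<dots> \<le> (\<Sum>m<s0. M i m * (q ^ n * u m))"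
      using Suc.IH M by (intro sum_mono mult_left_mono) auto
    also have "\<dots> = q ^ n * (\<Sum>m<s0. M i m * u m)"
      by (simp add: sum_distrib_left mult.left_commute)
    also have "\<dots> \<le> q ^ n * (q * u i)"
      using lyapunov[OF Suc.prems] q by (intro mult_left_mono) auto
    finally show ?case by (simp add: ac_simps)
  qed (simp add: if_distrib[of "\<lambda>x. x * _"] cong: if_cong)
  have nonneg: "0 \<le> matpow s0 M n i j' * u j'" if "j' < s0" for j'
    using M u[OF that] lo by (intro mult_nonneg_nonneg matpow_nonneg) auto
  have "matpow s0 M n i j * lo \<le> matpow s0 M n i j * u j"
    using u[OF j] M by (intro mult_left_mono matpow_nonneg) auto
  also have "\<dots> \<le> (\<Sum>j<s0. matpow s0 M n i j * u j)"
    using j nonneg by (intro member_le_sum) auto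
  also have "\<dots> \<le> q ^ n * u i"
    by (rule iterate[OF i])
  also have "\<dots> \<le> q ^ n * hi"
    using u[OF i] q by (intro mult_left_mono) auto
  finally show ?thesis
    using lo by (simp add: field_simps)
qed

locale negative_drift =
  fixes s0 :: nat and A :: "int \<Rightarrow> int \<Rightarrow> nat \<Rightarrow> nat \<Rightarrow> real" and pi :: "nat \<Rightarrow> real"
    and u1 u2 :: real
  assumes s0_pos: "s0 > 0"
    and A_nonneg: "\<And>k l i j. A k l i j \<ge> 0"
    and A_stoch: "\<And>i. i < s0 \<Longrightarrow> (\<Sum>k\<in>steps. \<Sum>l\<in>steps. \<Sum>j<s0. A k l i j) = 1"
    and pi_nonneg: "\<And>j. j < s0 \<Longrightarrow> pi j \<ge> 0"
    and pi_sum: "(\<Sum>j<s0. pi j) = 1"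
    and pi_stat: "\<And>j'. j' < s0 \<Longrightarrow> (\<Sum>i<s0. pi i * (\<Sum>k\<in>steps. \<Sum>l\<in>steps. A k l i j')) = pi j'"
    and phase_irreducible: "\<And>i j. i < s0 \<Longrightarrow> j < s0 \<Longrightarrow> \<exists>n. matpow s0 (A_theta A 0 0) n i j > 0"
    and direction_bound: "\<And>k l. k \<in> steps \<Longrightarrow> l \<in> steps \<Longrightarrow> \<bar>of_int k * u1 + of_int l * u2\<bar> \<le> 1"
    and drift_neg:
      "(\<Sum>i<s0. pi i * (\<Sum>j<s0. \<Sum>k\<in>steps. \<Sum>l\<in>steps. (of_int k * u1 + of_int l * u2) * A k l i j)) < 0"
begin

definition P :: "nat \<Rightarrow> nat \<Rightarrow> real" where
  "P i j = (\<Sum>k\<in>steps. \<Sum>l\<in>steps. A k l i j)"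

text \<open>The lazy chain \<open>Q = (I + P) / 2\<close> is aperiodic, so irreducibility makes some power of it
  entrywise positive.\<close>

definition Q :: "nat \<Rightarrow> nat \<Rightarrow> real" where
  "Q i j = (if i = j then 1/2 else 0) + P i j / 2"

definition drift :: "nat \<Rightarrow> real" where
  "drift i = (\<Sum>j<s0. \<Sum>k\<in>steps. \<Sum>l\<in>steps. (of_int k * u1 + of_int l * u2) * A k l i j)"

definition mean_drift :: real where
  "mean_drift = (\<Sum>i<s0. pi i * drift i)"

lemma mean_drift_neg: "mean_drift < 0"
  using drift_neg unfolding mean_drift_def drift_def .

lemma A_theta_zero: "A_theta A 0 0 = P"
  unfolding A_theta_def P_def by (intro ext) simp

lemma P_nonneg: "P i j \<ge> 0"
  unfolding P_def using A_nonneg by (auto intro!: sum_nonneg)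

lemma Q_nonneg: "Q i j \<ge> 0"
  unfolding Q_def using P_nonneg[of i j] by simp

lemma P_row_sum: "i < s0 \<Longrightarrow> (\<Sum>j<s0. P i j) = 1"
  unfolding P_def using A_stoch sum_rotate3[where f = "\<lambda>k l j. A k l i j" and X = steps and Y = steps
      and Z = "{..<s0}"]
  by simp

lemma Q_row_sum: "i < s0 \<Longrightarrow> (\<Sum>j<s0. Q i j) = 1"
  unfolding Q_def using P_row_sum by (simp add: sum.distrib sum_divide_distrib[symmetric])

lemma Q_apply: "i < s0 \<Longrightarrow> (\<Sum>j<s0. Q i j * v j) = v i / 2 + (\<Sum>j<s0. P i j * v j) / 2"
  unfolding Q_def
  by (simp add: distrib_right sum.distrib sum_divide_distrib[symmetric] if_distrib[of "\<lambda>x. x * _"] cong: if_cong)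

lemma pi_Q_stationary: "j < s0 \<Longrightarrow> (\<Sum>i<s0. pi i * Q i j) = pi j"
  using pi_stat unfolding Q_def P_def
  by (simp add: distrib_left sum.distrib sum_divide_distrib[symmetric] if_distrib[of "\<lambda>x. _ * x"] cong: if_cong)

lemma matpow_Q_ge: "i < s0 \<Longrightarrow> n \<le> L \<Longrightarrow> (1/2) ^ L * matpow s0 P n i j \<le> matpow s0 Q L i j"
proof (induction L arbitrary: n i j)
  case (Suc L)
  have Q_step: "matpow s0 Q (Suc L) i j = matpow s0 Q L i j / 2 + (\<Sum>m<s0. P i m * matpow s0 Q L m j) / 2"
    using Q_apply[OF Suc.prems(1)] by simp
  have nonneg: "0 \<le> matpow s0 Q L i j" "0 \<le> (\<Sum>m<s0. P i m * matpow s0 Q L m j)"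
    by (auto intro!: sum_nonneg mult_nonneg_nonneg P_nonneg matpow_nonneg Q_nonneg)
  show ?case
  proof (cases "n \<le> L")
    case True
    then show ?thesis
      using Suc.IH[OF Suc.prems(1) True, of j] Q_step nonneg by (simp add: add_increasing2)
  next
    case False
    then have n: "n = Suc L" using Suc.prems by simp
    have "(1/2) ^ Suc L * matpow s0 P n i j = (\<Sum>m<s0. P i m * ((1/2) ^ L * matpow s0 P L m j)) / 2"
      unfolding n by (simp add: sum_distrib_left sum_divide_distrib[symmetric] mult_ac)
    also have "\<dots> \<le> (\<Sum>m<s0. P i m * matpow s0 Q L m j) / 2"
      using Suc.IH[of _ L j] by (intro divide_right_mono sum_mono mult_left_mono P_nonneg) auto
    finally show ?thesis using Q_step nonneg by simp
  qed
qed simp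

lemma Q_power_positive: "\<exists>L \<delta>. \<delta> > 0 \<and> (\<forall>i<s0. \<forall>j<s0. matpow s0 Q L i j \<ge> \<delta>)"
proof -
  define PS where "PS = {..<s0} \<times> {..<s0}"
  have "\<forall>p\<in>PS. \<exists>n. matpow s0 P n (fst p) (snd p) > 0"
    using phase_irreducible unfolding A_theta_zero PS_def by (simp add: lessThan_def)
  then obtain N where N: "\<And>p. p \<in> PS \<Longrightarrow> matpow s0 P (N p) (fst p) (snd p) > 0"
    by metis
  have fin: "finite PS" and ne: "PS \<noteq> {}"
    unfolding PS_def using s0_pos by auto
  define L where "L = Max (N ` PS)"
  define \<delta> where "\<delta> = Min ((\<lambda>p. (1/2) ^ L * matpow s0 P (N p) (fst p) (snd p)) ` PS)"
  have "\<delta> \<in> (\<lambda>p. (1/2) ^ L * matpow s0 P (N p) (fst p) (snd p)) ` PS"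
    unfolding \<delta>_def using fin ne by (intro Min_in) auto
  then have "\<delta> > 0" using N by auto
  moreover have "matpow s0 Q L i j \<ge> \<delta>" if "i < s0" "j < s0" for i j
  proof -
    have p: "(i, j) \<in> PS" using that unfolding PS_def by auto
    have "\<delta> \<le> (1/2) ^ L * matpow s0 P (N (i, j)) i j"
      unfolding \<delta>_def using fin p by (intro Min_le) (auto intro: image_eqI[of _ _ "(i, j)"])
    also have "\<dots> \<le> matpow s0 Q L i j"
      using matpow_Q_ge[OF that(1), of "N (i, j)" L j] fin p unfolding L_def by auto
    finally show ?thesis .
  qed
  ultimately show ?thesis by blast
qed

primrec Qdrift :: "nat \<Rightarrow> nat \<Rightarrow> real" where
  "Qdrift 0 = drift"
| "Qdrift (Suc m) = (\<lambda>i. \<Sum>j<s0. Q i j * Qdrift m j)"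

text \<open>\<open>poisson N\<close> solves \<open>(I - P) w = drift - Qdrift N\<close> (\<open>poisson_equation\<close>); as \<open>Qdrift N\<close>
  tends to the constant \<open>mean_drift\<close>, it approximately solves the Poisson equation.\<close>

definition poisson :: "nat \<Rightarrow> nat \<Rightarrow> real" where
  "poisson N i = (\<Sum>m<N. Qdrift m i) / 2"

lemma drift_abs_le_1: "i < s0 \<Longrightarrow> \<bar>drift i\<bar> \<le> 1"
proof -
  assume i: "i < s0"
  have "\<bar>drift i\<bar> \<le> (\<Sum>j<s0. \<Sum>k\<in>steps. \<Sum>l\<in>steps. \<bar>(of_int k * u1 + of_int l * u2) * A k l i j\<bar>)"
    unfolding drift_def by (rule order_trans[OF sum_abs], intro sum_mono order_trans[OF sum_abs]) simp
  also have "\<dots> \<le> (\<Sum>j<s0. \<Sum>k\<in>steps. \<Sum>l\<in>steps. A k l i j)"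
    using direction_bound A_nonneg by (intro sum_mono) (simp add: abs_mult mult_left_le_one_le)
  also have "\<dots> = 1"
    using P_row_sum[OF i] unfolding P_def .
  finally show ?thesis .
qed

lemma Qdrift_abs_le_1: "i < s0 \<Longrightarrow> \<bar>Qdrift m i\<bar> \<le> 1"
proof (induction m arbitrary: i)
  case (Suc m)
  have "\<bar>Qdrift (Suc m) i\<bar> \<le> (\<Sum>j<s0. Q i j * \<bar>Qdrift m j\<bar>)"
    using Q_nonneg by (simp add: order_trans[OF sum_abs] abs_mult)
  also have "\<dots> \<le> (\<Sum>j<s0. Q i j)"
    using Suc.IH Q_nonneg by (intro sum_mono) (simp add: mult_left_le)
  finally show ?case using Q_row_sum Suc.prems by simp
qed (simp add: drift_abs_le_1)

lemma Qdrift_add: "i < s0 \<Longrightarrow> Qdrift (m + L) i = (\<Sum>j<s0. matpow s0 Q L i j * Qdrift m j)"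
proof (induction L arbitrary: i)
  case (Suc L)
  have "Qdrift (m + Suc L) i = (\<Sum>j<s0. Q i j * (\<Sum>j'<s0. matpow s0 Q L j j' * Qdrift m j'))"
    using Suc.IH by simp
  also have "\<dots> = (\<Sum>j'<s0. matpow s0 Q (Suc L) i j' * Qdrift m j')"
    unfolding matpow.simps sum_distrib_left sum_distrib_right by (subst sum.swap) (simp add: mult.assoc)
  finally show ?case .
qed (simp add: if_distrib[of "\<lambda>x. x * _"] cong: if_cong)

lemma pi_Qdrift: "(\<Sum>i<s0. pi i * Qdrift m i) = mean_drift"
proof (induction m)
  case (Suc m)
  have "(\<Sum>i<s0. pi i * Qdrift (Suc m) i) = (\<Sum>j<s0. (\<Sum>i<s0. pi i * Q i j) * Qdrift m j)"
    unfolding Qdrift.simps sum_distrib_left sum_distrib_right by (subst sum.swap) (simp add: mult.assoc)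
  then show ?case
    using Suc pi_Q_stationary by simp
qed (simp add: mean_drift_def)

lemma Qdrift_oscillation:
  assumes L: "\<And>i j. i < s0 \<Longrightarrow> j < s0 \<Longrightarrow> matpow s0 Q L i j \<ge> \<delta>"
    and i: "i < s0" and i': "i' < s0"
  shows "Qdrift (k * L) i - Qdrift (k * L) i' \<le> (1 - real s0 * \<delta>) ^ k * 2"
  using i i'
proof (induction k arbitrary: i i')
  case 0
  then show ?case using Qdrift_abs_le_1[of i 0] Qdrift_abs_le_1[of i' 0] by simp
next
  case (Suc k)
  have "Qdrift (Suc k * L) j = (\<Sum>j'<s0. matpow s0 Q L j j' * Qdrift (k * L) j')" if "j < s0" for j
    using Qdrift_add[OF that, of "k * L" L] by (simp add: add.commute)
  moreover have "(\<Sum>j'<s0. matpow s0 Q L i j' * Qdrift (k * L) j') - (\<Sum>j'<s0. matpow s0 Q L i' j' * Qdrift (k * L) j')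
      \<le> (1 - real s0 * \<delta>) * ((1 - real s0 * \<delta>) ^ k * 2)"
    by (rule oscillation_contraction[OF matpow_row_sum[OF Q_row_sum] L Suc.IH Suc.prems])
  ultimately show ?case
    using Suc.prems by simp
qed

lemma Qdrift_eventually_le: "\<exists>N. \<forall>i<s0. Qdrift N i \<le> mean_drift / 2"
proof -
  obtain L \<delta> where \<delta>: "\<delta> > 0" and L: "\<And>i j. i < s0 \<Longrightarrow> j < s0 \<Longrightarrow> matpow s0 Q L i j \<ge> \<delta>"
    using Q_power_positive by blast
  have "1 - real s0 * \<delta> < 1" using \<delta> s0_pos by simp
  then obtain k where k: "(1 - real s0 * \<delta>) ^ k < - mean_drift / 4"
    using real_arch_pow_inv[of "- mean_drift / 4" "1 - real s0 * \<delta>"] mean_drift_neg by auto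
  obtain i0 where i0: "i0 < s0" and min: "\<And>i. i < s0 \<Longrightarrow> Qdrift (k * L) i0 \<le> Qdrift (k * L) i"
  proof -
    have "Min (Qdrift (k * L) ` {..<s0}) \<in> Qdrift (k * L) ` {..<s0}"
      using s0_pos by (intro Min_in) auto
    then obtain i0 where i0: "i0 < s0" "Min (Qdrift (k * L) ` {..<s0}) = Qdrift (k * L) i0"
      by auto
    have "Qdrift (k * L) i0 \<le> Qdrift (k * L) i" if "i < s0" for i
      unfolding i0(2)[symmetric] using that by (intro Min_le) auto
    with i0(1) show ?thesis by (rule that)
  qed
  have "Qdrift (k * L) i0 = (\<Sum>i<s0. pi i * Qdrift (k * L) i0)"
    using pi_sum by (simp add: sum_distrib_right[symmetric])
  also have "\<dots> \<le> (\<Sum>i<s0. pi i * Qdrift (k * L) i)"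
    using pi_nonneg min by (intro sum_mono mult_left_mono) auto
  also have "\<dots> = mean_drift"
    by (rule pi_Qdrift)
  finally have "Qdrift (k * L) i0 \<le> mean_drift" .
  then have "Qdrift (k * L) i \<le> mean_drift / 2" if "i < s0" for i
    using Qdrift_oscillation[OF L that i0(1), of k] k by simp
  then show ?thesis by blast
qed

lemma poisson_equation:
  "i < s0 \<Longrightarrow> drift i + (\<Sum>j<s0. P i j * poisson N j) - poisson N i = Qdrift N i"
proof -
  assume i: "i < s0"
  have "(\<Sum>j<s0. P i j * poisson N j) = (\<Sum>m<N. \<Sum>j<s0. P i j * Qdrift m j) / 2"
    unfolding poisson_def
    by (simp add: sum_distrib_left sum_divide_distrib[symmetric] sum.swap[of _ "{..<N}"])
  also have "\<dots> = (\<Sum>m<N. 2 * Qdrift (Suc m) i - Qdrift m i) / 2"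
    using Q_apply[OF i] by simp
  finally have "(\<Sum>j<s0. P i j * poisson N j) = (\<Sum>m<N. Qdrift (Suc m) i) - poisson N i"
    unfolding poisson_def by (simp add: sum_subtractf sum_distrib_left[symmetric])
  moreover have "(\<Sum>m<N. Qdrift (Suc m) i) - (\<Sum>m<N. Qdrift m i) = Qdrift N i - Qdrift 0 i"
    using sum_lessThan_telescope[of "\<lambda>m. Qdrift m i" N] by (simp add: sum_subtractf)
  ultimately show ?thesis
    unfolding poisson_def by simp
qed

lemma poisson_abs_le: "i < s0 \<Longrightarrow> \<bar>poisson N i\<bar> \<le> real N"
proof -
  assume i: "i < s0"
  have "\<bar>\<Sum>m<N. Qdrift m i\<bar> \<le> (\<Sum>m<N. 1)"
    using Qdrift_abs_le_1[OF i] by (intro order_trans[OF sum_abs] sum_mono) auto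
  then show ?thesis
    unfolding poisson_def by simp
qed

lemma A_theta_lyapunov_bound:
  assumes W: "\<And>j. j < s0 \<Longrightarrow> \<bar>poisson N j\<bar> \<le> W"
    and t: "0 < t" "t \<le> 1" "t * W \<le> 1/2" and i: "i < s0"
  shows "(\<Sum>j<s0. A_theta A (t * u1) (t * u2) i j * (1 + t * poisson N j))
    \<le> 1 + t * (\<Sum>j<s0. P i j * poisson N j) + t * drift i + t\<^sup>2 * (1 + 2 * W)"
proof -
  define u where "u j = 1 + t * poisson N j" for j
  define \<delta> where "\<delta> k l = of_int k * u1 + of_int l * u2" for k l
  have "exp (of_int k * (t * u1) + of_int l * (t * u2)) * u j \<le> u j + t * \<delta> k l + t\<^sup>2 * (1 + 2 * W)"
    if "k \<in> steps" "l \<in> steps" "j < s0" for k l j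
    using exp_mult_affine_le[OF direction_bound[OF that(1,2)] t(1,2) W[OF that(3)] t(3)]
    unfolding u_def \<delta>_def by (simp add: algebra_simps)
  then have "(\<Sum>j<s0. A_theta A (t * u1) (t * u2) i j * u j)
      \<le> (\<Sum>j<s0. \<Sum>k\<in>steps. \<Sum>l\<in>steps. A k l i j * (u j + t * \<delta> k l + t\<^sup>2 * (1 + 2 * W)))"
    unfolding A_theta_def sum_distrib_right mult.assoc
    using A_nonneg by (intro sum_mono) (simp add: mult.left_commute[of _ "A _ _ _ _"] mult_left_mono)
  also have "\<dots> = (\<Sum>j<s0. P i j * u j) + t * drift i + t\<^sup>2 * (1 + 2 * W) * (\<Sum>j<s0. P i j)"
    unfolding P_def drift_def \<delta>_def
    by (simp add: distrib_left sum.distrib sum_distrib_left sum_distrib_right mult_ac)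
  also have "\<dots> = 1 + t * (\<Sum>j<s0. P i j * poisson N j) + t * drift i + t\<^sup>2 * (1 + 2 * W)"
    unfolding u_def using P_row_sum[OF i] by (simp add: algebra_simps sum.distrib sum_distrib_left)
  finally show ?thesis
    unfolding u_def .
qed

lemma lyapunov_step:
  assumes N: "\<And>i. i < s0 \<Longrightarrow> Qdrift N i \<le> mean_drift / 2"
    and W: "\<And>j. j < s0 \<Longrightarrow> \<bar>poisson N j\<bar> \<le> W"
    and t: "0 < t" "t \<le> 1" "t * W \<le> 1/2" "t * (1 + 2 * W) \<le> - mean_drift / 4"
    and i: "i < s0"
  shows "(\<Sum>j<s0. A_theta A (t * u1) (t * u2) i j * (1 + t * poisson N j))
    \<le> (1 + t * mean_drift / 8) * (1 + t * poisson N i)"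
proof -
  have "t * poisson N i \<le> t * W"
    using W[OF i] t by (intro mult_left_mono) auto
  then have u: "1 + t * poisson N i \<le> 2"
    using t by linarith
  have "(\<Sum>j<s0. A_theta A (t * u1) (t * u2) i j * (1 + t * poisson N j))
      \<le> 1 + t * (\<Sum>j<s0. P i j * poisson N j) + t * drift i + t\<^sup>2 * (1 + 2 * W)"
    by (rule A_theta_lyapunov_bound[OF W t(1-3) i])
  also have "\<dots> = 1 + t * (drift i + (\<Sum>j<s0. P i j * poisson N j)) + t * (t * (1 + 2 * W))"
    by (simp add: algebra_simps power2_eq_square)
  also have "\<dots> = (1 + t * poisson N i) + t * Qdrift N i + t * (t * (1 + 2 * W))"
    using poisson_equation[OF i, of N] by (simp add: algebra_simps)
  also have "\<dots> \<le> (1 + t * poisson N i) + t * (mean_drift / 2) + t * (- mean_drift / 4)"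
    using N[OF i] t by (intro add_mono mult_left_mono) auto
  also have "\<dots> \<le> (1 + t * mean_drift / 8) * (1 + t * poisson N i)"
  proof -
    have "t * mean_drift \<le> 0"
      using t mean_drift_neg by (simp add: mult_nonneg_nonpos)
    then have "0 \<le> (t * mean_drift / 8) * ((1 + t * poisson N i) - 2)"
      using u by (intro mult_nonpos_nonpos) auto
    then show ?thesis by (simp add: algebra_simps)
  qed
  finally show ?thesis .
qed

lemma mean_drift_ge: "mean_drift \<ge> -1"
proof -
  have "- 1 = (\<Sum>i<s0. pi i * (- 1))"
    using pi_sum by (simp add: sum_negf)
  also have "\<dots> \<le> mean_drift"
    unfolding mean_drift_def using pi_nonneg drift_abs_le_1 by (intro sum_mono mult_left_mono) (auto simp: abs_le_iff)
  finally show ?thesis .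
qed

lemma geometric_decay:
  obtains t C q where "t > 0" "0 \<le> q" "q < 1"
    "\<And>n i j. i < s0 \<Longrightarrow> j < s0 \<Longrightarrow> matpow s0 (A_theta A (t * u1) (t * u2)) n i j \<le> C * q ^ n"
proof -
  obtain N where N: "\<And>i. i < s0 \<Longrightarrow> Qdrift N i \<le> mean_drift / 2"
    using Qdrift_eventually_le by blast
  have W: "\<bar>poisson N j\<bar> \<le> real N + 1" if "j < s0" for j
    using poisson_abs_le[OF that, of N] by linarith
  obtain t where t: "0 < t" "t \<le> 1" "t * (real N + 1) \<le> 1/2"
    and tK: "t * (1 + 2 * (real N + 1)) \<le> - mean_drift / 4"
    using exists_small_tilt_parameter[of "real N + 1" mean_drift] mean_drift_neg by auto
  define u where "u j = 1 + t * poisson N j" for j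
  have u: "1/2 \<le> u j \<and> u j \<le> 3/2" if "j < s0" for j
  proof -
    have "\<bar>t * poisson N j\<bar> \<le> t * (real N + 1)"
      using W[OF that] t by (simp add: abs_mult)
    then show ?thesis
      using t unfolding u_def abs_le_iff by linarith
  qed
  define q where "q = 1 + t * mean_drift / 8"
  have q0: "q \<ge> 0"
    using mult_left_mono[OF mean_drift_ge, of t] t unfolding q_def by simp
  have q1: "q < 1"
    unfolding q_def using t mean_drift_neg by (simp add: mult_pos_neg)
  have "matpow s0 (A_theta A (t * u1) (t * u2)) n i j \<le> (3/2) / (1/2) * q ^ n"
    if "i < s0" "j < s0" for n i j
  proof (rule matpow_le_of_lyapunov[where u = u])
    show "\<And>i. i < s0 \<Longrightarrow> (\<Sum>j<s0. A_theta A (t * u1) (t * u2) i j * u j) \<le> q * u i"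
      unfolding u_def q_def by (rule lyapunov_step[OF N W t tK])
  qed (use that A_nonneg q0 u in \<open>auto intro: A_theta_nonneg\<close>)
  then show ?thesis
    using t q0 q1 that by blast
qed

end

section \<open>Summability of the generating functions\<close>

lemma powr_le_one_plus:
  fixes x s :: real
  assumes "0 \<le> x" "0 < s" "s < 1"
  shows "x powr s \<le> 1 + x"
proof (cases "x \<le> 1")
  case True
  then show ?thesis using assms powr_le1[of s x] by simp
next
  case False
  then show ?thesis using assms powr_mono[of s 1 x] by simp
qed

lemma summable_at_interpolated_tilt:
  assumes A: "\<And>k l i j. A k l i j \<ge> 0"
    and th: "(th1, th2) \<in> Gamma_bar A s0"
    and decay: "\<And>n i j. i < s0 \<Longrightarrow> j < s0 \<Longrightarrow> matpow s0 (A_theta A a0 b0) n i j \<le> C * q ^ n"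
    and q: "0 < q" "q < 1" and C: "C > 0" and s: "0 < s" "s < 1"
    and i: "i < s0" and j: "j < s0"
  shows "summable (\<lambda>n. matpow s0 (A_theta A (s * th1 + (1 - s) * a0) (s * th2 + (1 - s) * b0)) n i j)"
proof -
  obtain c1 c2 where poly: "\<And>n. matpow s0 (A_theta A th1 th2) n i j \<le> c1 + c2 * real n ^ (s0 - 1)"
    using Gamma_bar_matpow_poly_bound[OF th] i j by metis
  define r where "r = q powr (1 - s)"
  define K where "K = C powr (1 - s)"
  have r: "0 \<le> r" "r < 1"
    unfolding r_def using q s powr_less_mono2[of "1 - s" q 1] by auto
  have nonneg: "0 \<le> matpow s0 (A_theta A th th') n i j" for th th' n
    by (rule matpow_nonneg[OF A_theta_nonneg[OF A]])
  have bound: "norm (matpow s0 (A_theta A (s * th1 + (1 - s) * a0) (s * th2 + (1 - s) * b0)) n i j)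
      \<le> K * (1 + \<bar>c1\<bar>) * r ^ n + K * \<bar>c2\<bar> * (real n ^ (s0 - 1) * r ^ n)" for n
  proof -
    let ?x = "matpow s0 (A_theta A th1 th2) n i j"
    have "norm (matpow s0 (A_theta A (s * th1 + (1 - s) * a0) (s * th2 + (1 - s) * b0)) n i j)
        \<le> ?x powr s * matpow s0 (A_theta A a0 b0) n i j powr (1 - s)"
      using matpow_A_theta_log_convex[OF A s] nonneg by simp
    also have "\<dots> \<le> (1 + ?x) * (C * q ^ n) powr (1 - s)"
      using s nonneg decay[OF i j] powr_le_one_plus[OF nonneg s]
      by (intro mult_mono powr_mono2) auto
    also have "(C * q ^ n) powr (1 - s) = K * r ^ n"
      unfolding K_def r_def using q C by (simp add: powr_mult powr_realpow[symmetric] powr_powr mult.commute)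
    also have "(1 + ?x) * (K * r ^ n) \<le> (1 + \<bar>c1\<bar> + \<bar>c2\<bar> * real n ^ (s0 - 1)) * (K * r ^ n)"
    proof (rule mult_right_mono)
      show "1 + ?x \<le> 1 + \<bar>c1\<bar> + \<bar>c2\<bar> * real n ^ (s0 - 1)"
        using poly[of n] abs_ge_self[of c1] mult_right_mono[OF abs_ge_self[of c2], of "real n ^ (s0 - 1)"]
        by simp
    qed (use r in \<open>simp add: K_def\<close>)
    finally show ?thesis
      by (simp add: algebra_simps)
  qed
  have "summable (\<lambda>n. K * (1 + \<bar>c1\<bar>) * r ^ n + K * \<bar>c2\<bar> * (real n ^ (s0 - 1) * r ^ n))"
    using r by (intro summable_add summable_mult summable_geometric summable_poly_times_geometric) auto
  then show ?thesis
    by (rule summable_comparison_test') (rule bound)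
qed

lemma summable_power_series_geometric_bound:
  fixes c :: "nat \<Rightarrow> real" and z :: complex
  assumes "\<And>k. 0 \<le> c k" "\<And>k. c k \<le> D * \<rho> ^ Suc k" and "0 \<le> \<rho>" "norm z * \<rho> < 1"
  shows "summable (\<lambda>k. z ^ Suc k * complex_of_real (c k))"
proof (rule summable_comparison_test')
  show "summable (\<lambda>k. D * (norm z * \<rho>) * (norm z * \<rho>) ^ k)"
    using assms by (intro summable_mult summable_geometric) auto
  fix k
  have "norm (z ^ Suc k * complex_of_real (c k)) \<le> norm z ^ Suc k * (D * \<rho> ^ Suc k)"
    using assms(1,2)[of k] by (simp add: norm_mult norm_power mult_left_mono del: power_Suc)
  then show "norm (z ^ Suc k * complex_of_real (c k)) \<le> D * (norm z * \<rho>) * (norm z * \<rho>) ^ k"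
    by (simp add: power_mult_distrib mult_ac)
qed

lemma summable_Nblk_series:
  assumes A: "\<And>k l i j. A k l i j \<ge> 0" and j: "j < s0"
    and summable: "summable (\<lambda>n. matpow s0 (A_theta A \<alpha> \<beta>) n j j')"
    and z: "norm z < exp (of_int c1 * \<alpha> + of_int c2 * \<beta>)"
  shows "summable (\<lambda>k. z ^ Suc k * complex_of_real (Nblk A s0 (x1, x2) (int (Suc k) * c1, int (Suc k) * c2) j j'))"
proof (rule summable_power_series_geometric_bound)
  define \<gamma> where "\<gamma> = of_int c1 * \<alpha> + of_int c2 * \<beta>"
  define S where "S = (\<Sum>n. matpow s0 (A_theta A \<alpha> \<beta>) n j j')"
  fix k
  show "0 \<le> Nblk A s0 (x1, x2) (int (Suc k) * c1, int (Suc k) * c2) j j'"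
    unfolding Nblk_def by simp
  have "Nblk A s0 (x1, x2) (int (Suc k) * c1, int (Suc k) * c2) j j'
      \<le> exp (- (\<alpha> * of_int (int (Suc k) * c1 - x1) + \<beta> * of_int (int (Suc k) * c2 - x2))) * S"
    unfolding S_def by (rule Nblk_le_tilted[OF A j summable])
  also have "exp (- (\<alpha> * of_int (int (Suc k) * c1 - x1) + \<beta> * of_int (int (Suc k) * c2 - x2)))
      = exp (\<alpha> * of_int x1 + \<beta> * of_int x2) * exp (- \<gamma>) ^ Suc k"
    unfolding \<gamma>_def exp_of_nat_mult[symmetric] exp_add[symmetric] by (simp add: algebra_simps)
  finally show "Nblk A s0 (x1, x2) (int (Suc k) * c1, int (Suc k) * c2) j j'
      \<le> (exp (\<alpha> * of_int x1 + \<beta> * of_int x2) * S) * exp (- \<gamma>) ^ Suc k"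
    by (simp add: mult_ac)
  show "0 \<le> exp (- \<gamma>)" by simp
  have "norm z < exp \<gamma>"
    using z unfolding \<gamma>_def .
  then show "norm z * exp (- \<gamma>) < 1"
    by (simp add: exp_minus divide_inverse[symmetric])
qed

lemma analytic_on_power_series_Suc:
  fixes c :: "nat \<Rightarrow> complex"
  assumes "\<And>z. z \<in> ball 0 R \<Longrightarrow> summable (\<lambda>k. z ^ Suc k * c k)"
  shows "(\<lambda>z. \<Sum>k. z ^ Suc k * c k) analytic_on ball 0 R"
proof -
  define a where "a n = (case n of 0 \<Rightarrow> 0 | Suc k \<Rightarrow> c k)" for n
  have "(\<lambda>n. a n * (z - 0) ^ n) sums (\<Sum>k. z ^ Suc k * c k)" if "z \<in> ball 0 R" for z
    using summable_sums[OF assms[OF that]] sums_Suc_iff[of "\<lambda>n. a n * (z - 0) ^ n"]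
    by (simp add: a_def mult.commute)
  then have "(\<lambda>z. \<Sum>k. z ^ Suc k * c k) holomorphic_on ball 0 R"
    by (rule power_series_holomorphic)
  then show ?thesis
    by (simp add: analytic_on_open)
qed

lemma exists_lt_exp_of_lt_exp_Sup:
  fixes S :: "real set"
  assumes "S \<noteq> {}" "bdd_above S" "r < exp (Sup S)"
  obtains t where "t \<in> S" "r < exp t"
proof (cases "r > 0")
  case True
  then have "ln r < Sup S"
    using assms(3) by (metis exp_less_cancel_iff exp_ln)
  then obtain t where "t \<in> S" "ln r < t"
    using less_cSup_iff[OF assms(1,2)] by blast
  then show ?thesis
    using True that by (metis exp_less_cancel_iff exp_ln)
next
  case False
  obtain t where "t \<in> S"
    using assms(1) by blast
  then show ?thesis
    using False that[of t] exp_gt_zero[of t] by linarith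
qed

section \<open>The modulated random walk\<close>

lemma Gamma_bar_directional_bound:
  assumes A: "\<And>k l i j. A k l i j \<ge> 0" and s0: "s0 > 0"
    and p: "npow s0 (trans_prob A s0) n (0, 0, 0) (e1, e2, 0) > 0"
    and th: "(th1, th2) \<in> Gamma_bar A s0"
  shows "th1 * of_int e1 + th2 * of_int e2 \<le> - ln (npow s0 (trans_prob A s0) n (0, 0, 0) (e1, e2, 0))"
proof -
  let ?p = "npow s0 (trans_prob A s0) n (0, 0, 0) (e1, e2, 0)"
  have "?p * exp (th1 * of_int e1 + th2 * of_int e2) \<le> matpow s0 (A_theta A th1 th2) n 0 0"
    using npow_tilted_le_matpow[where A = A, OF A trans_prob_nonneg[OF A] order_refl s0, of n 0 0 e1 e2 0]
    by simp
  also have "\<dots> \<le> 1"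
    by (rule Gamma_bar_matpow_diag_le_1[OF A s0 th])
  finally have "ln (?p * exp (th1 * of_int e1 + th2 * of_int e2)) \<le> 0"
    using p by simp
  then show ?thesis
    using p by (simp add: ln_mult)
qed

locale modulated_walk =
  fixes s0 :: nat and A :: "int \<Rightarrow> int \<Rightarrow> nat \<Rightarrow> nat \<Rightarrow> real" and pi :: "nat \<Rightarrow> real"
  assumes s0_pos: "s0 > 0"
    and A_nonneg: "\<And>k l i j. A k l i j \<ge> 0"
    and A_stoch: "\<And>i. i < s0 \<Longrightarrow> (\<Sum>k\<in>steps. \<Sum>l\<in>steps. \<Sum>j<s0. A k l i j) = 1"
    and pi_nonneg: "\<And>j. j < s0 \<Longrightarrow> pi j \<ge> 0"
    and pi_sum: "(\<Sum>j<s0. pi j) = 1"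
    and pi_stat: "\<And>j'. j' < s0 \<Longrightarrow> (\<Sum>i<s0. pi i * (\<Sum>k\<in>steps. \<Sum>l\<in>steps. A k l i j')) = pi j'"
    and drift: "(\<Sum>i<s0. pi i * (\<Sum>l\<in>steps. \<Sum>j<s0. A 1 l i j - A (-1) l i j)) < 0
             \<or> (\<Sum>i<s0. pi i * (\<Sum>k\<in>steps. \<Sum>j<s0. A k 1 i j - A k (-1) i j)) < 0"
    and irreducible: "irreducible_on s0 (trans_prob A s0) (state_space s0)"
begin

lemma phase_irreducible:
  assumes "i < s0" "j < s0"
  shows "\<exists>n. matpow s0 (A_theta A 0 0) n i j > 0"
proof -
  obtain n where "npow s0 (trans_prob A s0) n (0, 0, i) (0, 0, j) > 0"
    using irreducible assms unfolding irreducible_on_def state_space_def by blast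
  moreover have "npow s0 (trans_prob A s0) n (0, 0, i) (0, 0, j) \<le> matpow s0 (A_theta A 0 0) n i j"
    using npow_tilted_le_matpow[where A = A, OF A_nonneg trans_prob_nonneg[OF A_nonneg] order_refl assms(1),
        of n 0 0 0 0 j 0 0]
    by simp
  ultimately show ?thesis by (intro exI) (rule less_le_trans)
qed

lemma negative_drift_direction:
  obtains "negative_drift s0 A pi 1 0" | "negative_drift s0 A pi 0 1"
proof -
  let ?d1 = "\<lambda>i. \<Sum>l\<in>steps. \<Sum>j<s0. A 1 l i j - A (-1) l i j"
  let ?d2 = "\<lambda>i. \<Sum>k\<in>steps. \<Sum>j<s0. A k 1 i j - A k (-1) i j"
  have "(\<Sum>j<s0. \<Sum>k\<in>steps. \<Sum>l\<in>steps. (of_int k * u1 + of_int l * u2) * A k l i j)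
      = u1 * (\<Sum>k\<in>steps. of_int k * (\<Sum>l\<in>steps. \<Sum>j<s0. A k l i j))
        + u2 * (\<Sum>k\<in>steps. \<Sum>l\<in>steps. of_int l * (\<Sum>j<s0. A k l i j))" for u1 u2 :: real and i
    unfolding sum_rotate3[where Z = "{..<s0}", symmetric]
    by (simp add: distrib_left distrib_right sum.distrib sum_distrib_left mult_ac)
  also have "\<dots> u1 u2 i = u1 * ?d1 i + u2 * ?d2 i" for u1 u2 :: real and i
    by (simp add: sum_steps_weighted sum_subtractf)
  finally have drift_eq: "(\<Sum>i<s0. pi i * (\<Sum>j<s0. \<Sum>k\<in>steps. \<Sum>l\<in>steps. (of_int k * u1 + of_int l * u2) * A k l i j))
      = u1 * (\<Sum>i<s0. pi i * ?d1 i) + u2 * (\<Sum>i<s0. pi i * ?d2 i)" for u1 u2 :: real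
    by (simp add: sum_distrib_left sum.distrib algebra_simps)
  have drift_neg: "negative_drift s0 A pi u1 u2"
    if "\<bar>u1\<bar> + \<bar>u2\<bar> \<le> 1"
      and "u1 * (\<Sum>i<s0. pi i * ?d1 i) + u2 * (\<Sum>i<s0. pi i * ?d2 i) < 0" for u1 u2 :: real
  proof unfold_locales
    show "\<bar>of_int k * u1 + of_int l * u2\<bar> \<le> 1" if "k \<in> steps" "l \<in> steps" for k l
      using that \<open>\<bar>u1\<bar> + \<bar>u2\<bar> \<le> 1\<close> by (auto simp: steps_def)
    show "(\<Sum>i<s0. pi i * (\<Sum>j<s0. \<Sum>k\<in>steps. \<Sum>l\<in>steps. (of_int k * u1 + of_int l * u2) * A k l i j)) < 0"
      unfolding drift_eq by (rule that(2))
  qed (fact s0_pos A_nonneg A_stoch pi_nonneg pi_sum pi_stat phase_irreducible)+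
  from drift show ?thesis
  proof
    assume "(\<Sum>i<s0. pi i * (\<Sum>l\<in>steps. \<Sum>j<s0. A 1 l i j - A (-1) l i j)) < 0"
    then show ?thesis
      using drift_neg[of 1 0] that(1) by simp
  next
    assume "(\<Sum>i<s0. pi i * (\<Sum>k\<in>steps. \<Sum>j<s0. A k 1 i j - A k (-1) i j)) < 0"
    then show ?thesis
      using drift_neg[of 0 1] that(2) by simp
  qed
qed

lemma exists_geometric_decay:
  "\<exists>a0 b0 C q. C > 0 \<and> 0 < q \<and> q < 1 \<and>
     (\<forall>n i j. i < s0 \<longrightarrow> j < s0 \<longrightarrow> matpow s0 (A_theta A a0 b0) n i j \<le> C * q ^ n)"
proof -
  obtain a0 b0 C q where q: "0 \<le> q" "q < 1"
    and decay: "\<And>n i j. i < s0 \<Longrightarrow> j < s0 \<Longrightarrow> matpow s0 (A_theta A a0 b0) n i j \<le> C * q ^ n"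
  proof (cases rule: negative_drift_direction)
    case 1
    then show ?thesis
      using negative_drift.geometric_decay[OF 1] that by (metis mult_zero_right mult_1_right)
  next
    case 2
    then show ?thesis
      using negative_drift.geometric_decay[OF 2] that by (metis mult_zero_right mult_1_right)
  qed
  define C' where "C' = max C 1"
  define q' where "q' = max q (1/2)"
  have scale: "C * q ^ n \<le> C' * q' ^ n" for n
  proof -
    have "C * q ^ n \<le> C' * q ^ n"
      unfolding C'_def using q by (intro mult_right_mono) auto
    also have "\<dots> \<le> C' * q' ^ n"
      unfolding C'_def q'_def using q by (intro mult_left_mono power_mono) auto
    finally show ?thesis .
  qed
  have "matpow s0 (A_theta A a0 b0) n i j \<le> C' * q' ^ n" if "i < s0" "j < s0" for n i j
    using decay[OF that, of n] scale[of n] by (rule order_trans)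
  moreover have "C' > 0" "0 < q'" "q' < 1"
    unfolding C'_def q'_def using q by auto
  ultimately show ?thesis
    by blast
qed

lemma Gamma_bar_nonempty: "Gamma_bar A s0 \<noteq> {}"
proof -
  obtain a0 b0 C q where q: "0 < q" "q < 1"
    and decay: "\<And>n i j. i < s0 \<Longrightarrow> j < s0 \<Longrightarrow> matpow s0 (A_theta A a0 b0) n i j \<le> C * q ^ n"
    using exists_geometric_decay by blast
  have "\<bar>matpow s0 (A_theta A a0 b0) n i j\<bar> \<le> max C 0" if "i < s0" "j < s0" for n i j
  proof -
    have "C * q ^ n \<le> max C 0 * 1"
      using q by (intro mult_mono power_le_one) auto
    then show ?thesis
      using decay[OF that, of n] matpow_nonneg[OF A_theta_nonneg[OF A_nonneg]] by simp
  qed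
  then show ?thesis
    using Gamma_bar_if_matpow_bounded[OF s0_pos] by blast
qed

lemma bdd_above_Gamma_bar_directional:
  "bdd_above ((\<lambda>(th1, th2). th1 * of_int e1 + th2 * of_int e2) ` Gamma_bar A s0)"
proof -
  have "(0, 0, 0) \<in> state_space s0" "(e1, e2, 0) \<in> state_space s0"
    using s0_pos by (auto simp: state_space_def)
  then obtain n where p: "npow s0 (trans_prob A s0) n (0, 0, 0) (e1, e2, 0) > 0"
    using irreducible unfolding irreducible_on_def by blast
  show ?thesis
  proof (rule bdd_aboveI2)
    fix th assume "th \<in> Gamma_bar A s0"
    then show "(case th of (th1, th2) \<Rightarrow> th1 * of_int e1 + th2 * of_int e2)
        \<le> - ln (npow s0 (trans_prob A s0) n (0, 0, 0) (e1, e2, 0))"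
      using Gamma_bar_directional_bound[where A = A, OF A_nonneg s0_pos p] by (cases th) simp
  qed
qed

lemma exists_summable_tilt_near:
  assumes th: "(th1, th2) \<in> Gamma_bar A s0" and r: "r < exp (c1 * th1 + c2 * th2)"
  obtains \<alpha> \<beta> where "r < exp (c1 * \<alpha> + c2 * \<beta>)"
    and "\<And>i j. i < s0 \<Longrightarrow> j < s0 \<Longrightarrow> summable (\<lambda>n. matpow s0 (A_theta A \<alpha> \<beta>) n i j)"
proof -
  obtain a0 b0 C q where C: "C > 0" and q: "0 < q" "q < 1"
    and decay: "\<And>n i j. i < s0 \<Longrightarrow> j < s0 \<Longrightarrow> matpow s0 (A_theta A a0 b0) n i j \<le> C * q ^ n"
    using exists_geometric_decay by blast
  let ?f = "\<lambda>s. exp (c1 * (s * th1 + (1 - s) * a0) + c2 * (s * th2 + (1 - s) * b0))"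
  have "(?f \<longlongrightarrow> ?f 1) (at_left 1)"
    by (intro tendsto_intros)
  then have "eventually (\<lambda>s. r < ?f s) (at_left 1)"
    using r by (intro order_tendstoD(1)) auto
  moreover have "eventually (\<lambda>s. s \<in> {0<..<1}) (at_left (1::real))"
    by (rule eventually_at_left_real) simp
  ultimately obtain s where s: "r < ?f s" "0 < s" "s < 1"
    using eventually_happens[OF eventually_conj] by fastforce
  show ?thesis
    using that[of "s * th1 + (1 - s) * a0" "s * th2 + (1 - s) * b0"] s
      summable_at_interpolated_tilt[OF A_nonneg th decay q C s(2,3)] by blast
qed

lemma qtilde_finite:
  assumes j: "j < s0" and j': "j' < s0"
  shows "qtilde A s0 (x1, x2, j) (x1', x2', j') < \<infinity>"
proof -
  obtain a0 b0 C q where q: "0 < q" "q < 1"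
    and decay: "\<And>n i j. i < s0 \<Longrightarrow> j < s0 \<Longrightarrow> matpow s0 (A_theta A a0 b0) n i j \<le> C * q ^ n"
    using exists_geometric_decay by blast
  have "summable (\<lambda>n. matpow s0 (A_theta A a0 b0) n j j')"
  proof (rule summable_comparison_test')
    show "summable (\<lambda>n. C * q ^ n)"
      using q by (intro summable_mult summable_geometric) auto
    show "norm (matpow s0 (A_theta A a0 b0) n j j') \<le> C * q ^ n" for n
      using decay[OF j j'] matpow_nonneg[OF A_theta_nonneg[OF A_nonneg]] by simp
  qed
  then have "qtilde A s0 (x1, x2, j) (x1', x2', j')
      \<le> ennreal (exp (- (a0 * of_int (x1' - x1) + b0 * of_int (x2' - x2))) * (\<Sum>n. matpow s0 (A_theta A a0 b0) n j j'))"
    by (rule qtilde_le_tilted[where A = A, OF A_nonneg j])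
  then show ?thesis
    by (rule le_less_trans) simp
qed

lemma summable_Nblk_series_directional:
  assumes j: "j < s0" and j': "j' < s0"
    and z: "norm z < exp (Sup ((\<lambda>(th1, th2). th1 * of_int e1 + th2 * of_int e2) ` Gamma_bar A s0))"
  shows "summable (\<lambda>k. z ^ Suc k * complex_of_real (Nblk A s0 (x1, x2) (int (Suc k) * e1, int (Suc k) * e2) j j'))"
proof -
  let ?S = "(\<lambda>(th1, th2). th1 * of_int e1 + th2 * of_int e2) ` Gamma_bar A s0"
  have "bdd_above ?S"
    by (rule bdd_above_Gamma_bar_directional)
  moreover have "?S \<noteq> {}"
    using Gamma_bar_nonempty by simp
  ultimately obtain t where "t \<in> ?S" "norm z < exp t"
    using exists_lt_exp_of_lt_exp_Sup[OF _ _ z] by blast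
  then obtain th1 th2 where th: "(th1, th2) \<in> Gamma_bar A s0"
    and "norm z < exp (th1 * of_int e1 + th2 * of_int e2)"
    by auto
  then obtain \<alpha> \<beta> where z': "norm z < exp (of_int e1 * \<alpha> + of_int e2 * \<beta>)"
    and summable: "\<And>i j. i < s0 \<Longrightarrow> j < s0 \<Longrightarrow> summable (\<lambda>n. matpow s0 (A_theta A \<alpha> \<beta>) n i j)"
    using exists_summable_tilt_near[OF th, of "norm z" "of_int e1" "of_int e2"] by (auto simp: mult.commute)
  show ?thesis
    by (rule summable_Nblk_series[where A = A, OF A_nonneg j summable[OF j j'] z'])
qed

lemma summable_Phi1_series:
  assumes "j < s0" "j' < s0" and "z \<in> ball 0 (exp (Sup {th1. \<exists>th2. (th1, th2) \<in> Gamma_bar A s0}))"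
  shows "summable (\<lambda>k. z ^ Suc k * complex_of_real (Nblk A s0 (x1, x2) (int (Suc k), 0) j j'))"
proof -
  have "(\<lambda>(th1, th2). th1 * of_int 1 + th2 * of_int 0) ` Gamma_bar A s0 = {th1. \<exists>th2. (th1, th2) \<in> Gamma_bar A s0}"
    by force
  then show ?thesis
    using summable_Nblk_series_directional[OF assms(1,2), of z 1 0 x1 x2] assms(3) by simp
qed

lemma summable_Phi2_series:
  assumes "j < s0" "j' < s0" and "w \<in> ball 0 (exp (Sup {th2. \<exists>th1. (th1, th2) \<in> Gamma_bar A s0}))"
  shows "summable (\<lambda>k. w ^ Suc k * complex_of_real (Nblk A s0 (x1, x2) (0, int (Suc k)) j j'))"
proof -
  have "(\<lambda>(th1, th2). th1 * of_int 0 + th2 * of_int 1) ` Gamma_bar A s0 = {th2. \<exists>th1. (th1, th2) \<in> Gamma_bar A s0}"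
    by force
  then show ?thesis
    using summable_Nblk_series_directional[OF assms(1,2), of w 0 1 x1 x2] assms(3) by simp
qed

lemma Phi1_analytic:
  "j < s0 \<Longrightarrow> j' < s0 \<Longrightarrow>
    (\<lambda>z. Phi1 A s0 (x1, x2) z j j') analytic_on ball 0 (exp (Sup {th1. \<exists>th2. (th1, th2) \<in> Gamma_bar A s0}))"
  unfolding Phi1_def by (rule analytic_on_power_series_Suc) (rule summable_Phi1_series)

lemma Phi2_analytic:
  "j < s0 \<Longrightarrow> j' < s0 \<Longrightarrow>
    (\<lambda>w. Phi2 A s0 (x1, x2) w j j') analytic_on ball 0 (exp (Sup {th2. \<exists>th1. (th1, th2) \<in> Gamma_bar A s0}))"
  unfolding Phi2_def by (rule analytic_on_power_series_Suc) (rule summable_Phi2_series)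

end

theorem proposition4p4:
  fixes A :: "int \<Rightarrow> int \<Rightarrow> nat \<Rightarrow> nat \<Rightarrow> real" and s0 :: nat and pi :: "nat \<Rightarrow> real"
  assumes s0_pos: "s0 > 0"
    and A_nonneg: "\<And>k l i j. A k l i j \<ge> 0"
    and A_stoch: "\<And>i. i < s0 \<Longrightarrow> (\<Sum>k\<in>steps. \<Sum>l\<in>steps. \<Sum>j<s0. A k l i j) = 1"
    and pi_nonneg: "\<And>j. j < s0 \<Longrightarrow> pi j \<ge> 0"
    and pi_sum: "(\<Sum>j<s0. pi j) = 1"
    and pi_stat: "\<And>j'. j' < s0 \<Longrightarrow>
        (\<Sum>i<s0. pi i * (\<Sum>k\<in>steps. \<Sum>l\<in>steps. A k l i j')) = pi j'"
    and drift: "(\<Sum>i<s0. pi i * (\<Sum>l\<in>steps. \<Sum>j<s0. A 1 l i j - A (-1) l i j)) < 0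
             \<or> (\<Sum>i<s0. pi i * (\<Sum>k\<in>steps. \<Sum>j<s0. A k 1 i j - A k (-1) i j)) < 0"
    and irred: "irreducible_on s0 (trans_prob A s0) (state_space s0)"
    and aper: "aperiodic_on s0 (trans_prob A s0) (state_space s0)"
    and irred_plus: "irreducible_on s0 (trans_plus A s0) (pos_space s0)"
  shows "\<forall>x1 x2 j j'. 0 \<le> x1 \<and> 0 \<le> x2 \<and> j < s0 \<and> j' < s0 \<longrightarrow>
    (let R1 = exp (Sup {th1. \<exists>th2. (th1, th2) \<in> Gamma_bar A s0});
         R2 = exp (Sup {th2. \<exists>th1. (th1, th2) \<in> Gamma_bar A s0}) in
      (\<forall>k::nat. k \<ge> 1 \<longrightarrow> qtilde A s0 (x1, x2, j) (int k, 0, j') < \<infinity>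
                          \<and> qtilde A s0 (x1, x2, j) (0, int k, j') < \<infinity>)
    \<and> (\<forall>z\<in>ball 0 R1. summable (\<lambda>k. z ^ Suc k * complex_of_real (Nblk A s0 (x1, x2) (int (Suc k), 0) j j')))
    \<and> (\<lambda>z. Phi1 A s0 (x1, x2) z j j') analytic_on ball 0 R1
    \<and> (\<forall>w\<in>ball 0 R2. summable (\<lambda>k. w ^ Suc k * complex_of_real (Nblk A s0 (x1, x2) (0, int (Suc k)) j j')))
    \<and> (\<lambda>w. Phi2 A s0 (x1, x2) w j j') analytic_on ball 0 R2)"
proof -
  interpret modulated_walk s0 A pi
    by unfold_locales (fact s0_pos A_nonneg A_stoch pi_nonneg pi_sum pi_stat drift irred)+
  show ?thesis
    unfolding Let_def
    by (intro allI impI conjI ballI; elim conjE;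
        rule qtilde_finite summable_Phi1_series summable_Phi2_series Phi1_analytic Phi2_analytic; assumption)
qed

end
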